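(* Equip $\mathcal{I}_\alpha$ with the metric $d_\alpha$ (see context). Then: (a) The map $M\colon\mathcal{I}_\alpha\to\mathcal{M}$, $M(\beta)=\sum_{U\in\beta}\mathrm{Leb}(U)\,\delta_{\mathscr{D}_\beta(U)}$, is continuous, where $\mathcal{M}$ is the set of compactly supported finite Borel measures on $[0,\infty)$ with the topology of weak convergence. (b) The diversity map $\beta\mapsto\mathscr{D}_\beta(\infty)$ is $d_\alpha$-continuous on $\mathcal{I}_\alpha$, but not $d_H$-continuous on $\mathcal{I}_\alpha$. (c) The map $\textsc{ranked}\colon\mathcal{I}_\alpha\to\mathcal{S}^\downarrow$ that associates with $\beta$ the sequence of decreasing order statistics of $(\mathrm{Leb}(U),U\in\beta)$ (padded with zeros) is continuous, where $\mathcal{S}^\downarrow=\{(x_k)_{k\ge1}\colon x_1\ge x_2\ge\cdots\ge0,\ \sum_k x_k<\infty\}$ carries the $\ell_1$ metric.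
   Context: Fix $\alpha\in(0,1)$. An interval partition is a set $\beta$ of disjoint open subintervals (blocks) of some interval $[0,L]$ that cover $[0,L]$ up to a Lebesgue-null set; write $\|\beta\|:=L$ and $\mathrm{Leb}(U)$ for the length of a block $U$. For $\beta$ put $C_\beta:=[0,\|\beta\|]\setminus\bigcup_{U\in\beta}U$ and let $d_H(\beta,\gamma)$ be the Hausdorff distance between $C_\beta$ and $C_\gamma$. A partition $\beta$ has the $\alpha$-diversity property if for every $t\in[0,\|\beta\|]$ the limit $\mathscr{D}_\beta(t):=\Gamma(1-\alpha)\lim_{h\downarrow0}h^\alpha\#\{(a,b)\in\beta\colon b-a>h,\ b\le t\}$ exists; $\mathcal{I}_\alpha$ is the set of such partitions. For $U\in\beta$, $\mathscr{D}_\beta(U):=\mathscr{D}_\beta(t)$ for any $t\in U$, and $\mathscr{D}_\beta(\infty):=\mathscr{D}_\beta(\|\beta\|)$. A correspondence between $\beta,\gamma\in\mathcal{I}_\alpha$ is a finite sequence $(U_j,V_j)_{j\in[n]}$, $n\ge0$, of pairs in $\beta\times\gamma$ with $(U_j)_j$ and $(V_j)_j$ each strictly increasing in left-to-right order. Its $\alpha$-distortion is the maximum of (i) $\sum_{j}|\mathrm{Leb}(U_j)-\mathrm{Leb}(V_j)|+\|\beta\|-\sum_j\mathrm{Leb}(U_j)$, (ii) $\sum_{j}|\mathrm{Leb}(U_j)-\mathrm{Leb}(V_j)|+\|\gamma\|-\sum_j\mathrm{Leb}(V_j)$, (iii) $\sup_{j}|\mathscr{D}_\beta(U_j)-\mathscr{D}_\gamma(V_j)|$,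 (iv) $|\mathscr{D}_\beta(\infty)-\mathscr{D}_\gamma(\infty)|$. $d_\alpha(\beta,\gamma)$ is the infimum of the $\alpha$-distortion over all correspondences. *)

theory Defs
  imports "HOL-Analysis.Analysis"
begin

text \<open>An interval partition is represented by the set of its blocks; a block is
  the open interval with endpoints (a,b), encoded as the pair (a,b).\<close>

definition interval_partition :: "(real \<times> real) set \<Rightarrow> bool" where
  "interval_partition \<beta> \<longleftrightarrow>
     (\<forall>(a,b)\<in>\<beta>. 0 \<le> a \<and> a < b) \<and>
     (\<forall>U\<in>\<beta>. \<forall>V\<in>\<beta>. U \<noteq> V \<longrightarrow>
        {fst U<..<snd U} \<inter> {fst V<..<snd V} = {}) \<and>
     (\<exists>L. (\<forall>(a,b)\<in>\<beta>. b \<le> L) \<and>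
          {0..L} - (\<Union>(a,b)\<in>\<beta>. {a<..<b}) \<in> null_sets lborel)"

definition IP_mass :: "(real \<times> real) set \<Rightarrow> real" where
  "IP_mass \<beta> = (THE L. (\<forall>(a,b)\<in>\<beta>. b \<le> L) \<and>
          {0..L} - (\<Union>(a,b)\<in>\<beta>. {a<..<b}) \<in> null_sets lborel)"

definition block_len :: "real \<times> real \<Rightarrow> real" where
  "block_len U = snd U - fst U"

definition div_count :: "real \<Rightarrow> (real \<times> real) set \<Rightarrow> real \<Rightarrow> real \<Rightarrow> real" where
  "div_count \<alpha> \<beta> t h = h powr \<alpha> * real (card {(a,b)\<in>\<beta>. b - a > h \<and> b \<le> t})"

definition diversity_property :: "real \<Rightarrow> (real \<times> real) set \<Rightarrow> bool" where
  "diversity_property \<alpha> \<beta> \<longleftrightarrow>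
     (\<forall>t\<in>{0..IP_mass \<beta>}. \<exists>l. (div_count \<alpha> \<beta> t \<longlongrightarrow> l) (at_right 0))"

definition diversity :: "real \<Rightarrow> (real \<times> real) set \<Rightarrow> real \<Rightarrow> real" where
  "diversity \<alpha> \<beta> t = Gamma (1 - \<alpha>) * Lim (at_right 0) (div_count \<alpha> \<beta> t)"

text \<open>Diversity of a block U: D(t) for any t in U (we take the midpoint).\<close>
definition block_div :: "real \<Rightarrow> (real \<times> real) set \<Rightarrow> real \<times> real \<Rightarrow> real" where
  "block_div \<alpha> \<beta> U = diversity \<alpha> \<beta> ((fst U + snd U) / 2)"

definition total_div :: "real \<Rightarrow> (real \<times> real) set \<Rightarrow> real" where
  "total_div \<alpha> \<beta> = diversity \<alpha> \<beta> (IP_mass \<beta>)"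

definition I_alpha :: "real \<Rightarrow> (real \<times> real) set set" where
  "I_alpha \<alpha> = {\<beta>. interval_partition \<beta> \<and> diversity_property \<alpha> \<beta>}"

text \<open>A correspondence: a finite list of pairs (U_j,V_j) in beta x gamma, with
  both components strictly increasing left to right (blocks are disjoint, so
  left-to-right order is the order of left endpoints).\<close>
definition correspondence ::
    "(real \<times> real) set \<Rightarrow> (real \<times> real) set \<Rightarrow> ((real \<times> real) \<times> (real \<times> real)) list \<Rightarrow> bool" where
  "correspondence \<beta> \<gamma> cs \<longleftrightarrow>
     (\<forall>p\<in>set cs. fst p \<in> \<beta> \<and> snd p \<in> \<gamma>) \<and>
     sorted_wrt (\<lambda>p q. fst (fst p) < fst (fst q)) cs \<and>
     sorted_wrt (\<lambda>p q. fst (snd p) < fst (snd q)) cs"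

definition distortion ::
    "real \<Rightarrow> (real \<times> real) set \<Rightarrow> (real \<times> real) set \<Rightarrow> ((real \<times> real) \<times> (real \<times> real)) list \<Rightarrow> real" where
  "distortion \<alpha> \<beta> \<gamma> cs =
     (let s = (\<Sum>p\<leftarrow>cs. \<bar>block_len (fst p) - block_len (snd p)\<bar>) in
      Max ({ s + IP_mass \<beta> - (\<Sum>p\<leftarrow>cs. block_len (fst p)),
             s + IP_mass \<gamma> - (\<Sum>p\<leftarrow>cs. block_len (snd p)),
             \<bar>total_div \<alpha> \<beta> - total_div \<alpha> \<gamma>\<bar> } \<union>
           (\<lambda>p. \<bar>block_div \<alpha> \<beta> (fst p) - block_div \<alpha> \<gamma> (snd p)\<bar>) ` set cs))"

definition d_alpha :: "real \<Rightarrow> (real \<times> real) set \<Rightarrow> (real \<times> real) set \<Rightarrow> real" where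
  "d_alpha \<alpha> \<beta> \<gamma> = Inf {distortion \<alpha> \<beta> \<gamma> cs | cs. correspondence \<beta> \<gamma> cs}"

definition C_set :: "(real \<times> real) set \<Rightarrow> real set" where
  "C_set \<beta> = {0..IP_mass \<beta>} - (\<Union>(a,b)\<in>\<beta>. {a<..<b})"

definition hausdorff_dist :: "real set \<Rightarrow> real set \<Rightarrow> real" where
  "hausdorff_dist S T = max (SUP x\<in>S. infdist x T) (SUP y\<in>T. infdist y S)"

definition d_H :: "(real \<times> real) set \<Rightarrow> (real \<times> real) set \<Rightarrow> real" where
  "d_H \<beta> \<gamma> = hausdorff_dist (C_set \<beta>) (C_set \<gamma>)"

text \<open>Integral of f against M(beta) = sum_U Leb(U) delta_{D_beta(U)}.\<close>
definition M_integral :: "real \<Rightarrow> (real \<times> real) set \<Rightarrow> (real \<Rightarrow> real) \<Rightarrow> real" where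
  "M_integral \<alpha> \<beta> f = (\<Sum>\<^sub>\<infinity>U\<in>\<beta>. block_len U * f (block_div \<alpha> \<beta> U))"

text \<open>Decreasing order statistics (0-indexed: ranked beta k is the (k+1)-st largest
  block length with multiplicity, 0 if there are at most k blocks):
  x_{k+1} = inf { x > 0 : #{U : Leb U > x} < k+1 }.\<close>
definition ranked :: "(real \<times> real) set \<Rightarrow> nat \<Rightarrow> real" where
  "ranked \<beta> k = Inf {x. x > 0 \<and> card {U\<in>\<beta>. block_len U > x} \<le> k}"

definition cont_wrt :: "'a set \<Rightarrow> ('a \<Rightarrow> 'a \<Rightarrow> real) \<Rightarrow> ('b \<Rightarrow> 'b \<Rightarrow> real) \<Rightarrow> ('a \<Rightarrow> 'b) \<Rightarrow> bool" where
  "cont_wrt A d e f \<longleftrightarrow>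
     (\<forall>x\<in>A. \<forall>\<epsilon>>0. \<exists>\<delta>>0. \<forall>y\<in>A. d x y < \<delta> \<longrightarrow> e (f x) (f y) < \<epsilon>)"

end

(*
  The distortion of a correspondence bounds every quantity in the theorem. Its term (iv)
  is the difference of total diversities, which gives the d_alpha-continuity in (b).

  (a) The unmatched blocks have total length at most the distortion, matched blocks have
  close lengths, and matched diversities are close, so for bounded f, uniformly continuous
  on the bounded range of diversities, the two weighted sums of f are close.

  (c) By the layer-cake formula |r_k - q_k| is the measure of the levels x that separate
  the k-th ranked lengths. At a level x the ranked sequences differ in at most
  |N_beta(x) - N_gamma(x)| places, N counting the blocks longer than x; matched pairs
  contribute to this only at levels between their lengths, and unmatched blocks contribute
  their total length after integration. Hence the l1 distance is at most twice the
  distortion, and comparison with the empty partition gives summability.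

  (b) For the failure of d_H-continuity, take the partition with blocks of lengths
  (n+1)^(-1/alpha) placed left to right, whose total diversity is Gamma(1-alpha). Merging
  all blocks after the N-th into one yields a finite partition, of total diversity 0, whose
  cut set is Hausdorff-close to the original one.
*)

theory Submission
  imports Defs
begin

lemma interval_partition_block:
  assumes "interval_partition \<beta>" "U \<in> \<beta>"
  shows "0 \<le> fst U" "fst U < snd U"
  using assms unfolding interval_partition_def by (auto simp: case_prod_beta)

lemma block_len_pos: "interval_partition \<beta> \<Longrightarrow> U \<in> \<beta> \<Longrightarrow> 0 < block_len U"
  using interval_partition_block[of \<beta> U] unfolding block_len_def by auto

lemma interval_partition_bound:
  assumes "interval_partition \<beta>"
  obtains L where "\<forall>U\<in>\<beta>. snd U \<le> L" "0 \<le> L"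
    "{0..L} - (\<Union>(a,b)\<in>\<beta>. {a<..<b}) \<in> null_sets lborel"
proof -
  obtain L where L: "\<forall>(a,b)\<in>\<beta>. b \<le> L" "{0..L} - (\<Union>(a,b)\<in>\<beta>. {a<..<b}) \<in> null_sets lborel"
    using assms unfolding interval_partition_def by blast
  show ?thesis
  proof (cases "\<beta> = {}")
    case True
    then show ?thesis by (intro that[of 0]) (auto intro: countable_imp_null_set_lborel)
  next
    case False
    then obtain U where "U \<in> \<beta>" by blast
    then have "0 \<le> L" using interval_partition_block[OF assms] L(1) by (cases U) force
    then show ?thesis using that[of L] L by (auto simp: case_prod_beta)
  qed
qed

lemma IP_mass_eqI:
  assumes "interval_partition \<beta>" "\<beta> \<noteq> {}"
    "\<forall>U\<in>\<beta>. snd U \<le> L" "{0..L} - (\<Union>(a,b)\<in>\<beta>. {a<..<b}) \<in> null_sets lborel"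
  shows "IP_mass \<beta> = L"
  unfolding IP_mass_def
proof (rule the_equality)
  show "(\<forall>(a,b)\<in>\<beta>. b \<le> L) \<and> {0..L} - (\<Union>(a,b)\<in>\<beta>. {a<..<b}) \<in> null_sets lborel"
    using assms by auto
next
  have le: "L2 \<le> L1"
    if "\<forall>U\<in>\<beta>. snd U \<le> L1" "{0..L2} - (\<Union>(a,b)\<in>\<beta>. {a<..<b}) \<in> null_sets lborel" for L1 L2
  proof (rule ccontr)
    assume "\<not> L2 \<le> L1"
    obtain U where U: "U \<in> \<beta>" using assms(2) by blast
    then have "0 < L1" using interval_partition_block[OF assms(1) U] that(1) by force
    then have "{L1<..<L2} \<subseteq> {0..L2} - (\<Union>(a,b)\<in>\<beta>. {a<..<b})"
      using that(1) by fastforce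
    then have "{L1<..<L2} \<in> null_sets lborel"
      by (intro null_sets_subset[OF that(2)]) auto
    then have "emeasure lborel {L1<..<L2} = 0" by (rule null_setsD1)
    then show False using \<open>\<not> L2 \<le> L1\<close> by simp
  qed
  fix L' assume "(\<forall>(a,b)\<in>\<beta>. b \<le> L') \<and> {0..L'} - (\<Union>(a,b)\<in>\<beta>. {a<..<b}) \<in> null_sets lborel"
  then show "L' = L" using le[of L' L] le[of L L'] assms by (auto simp: case_prod_beta)
qed

text \<open>\<open>IP_mass {}\<close> is unspecified, since every \<open>L \<le> 0\<close> satisfies the defining property;
  hence the hypothesis \<open>\<beta> \<noteq> {}\<close> here and the term \<open>max 0 (IP_mass \<beta>)\<close> below.\<close>

lemma
  assumes "interval_partition \<beta>" "\<beta> \<noteq> {}"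
  shows block_end_le_IP_mass: "\<forall>U\<in>\<beta>. snd U \<le> IP_mass \<beta>"
    and IP_mass_nonneg: "0 \<le> IP_mass \<beta>"
proof -
  obtain L where L: "\<forall>U\<in>\<beta>. snd U \<le> L" "0 \<le> L"
    "{0..L} - (\<Union>(a,b)\<in>\<beta>. {a<..<b}) \<in> null_sets lborel"
    using interval_partition_bound[OF assms(1)] by blast
  with IP_mass_eqI[OF assms L(1,3)] show "\<forall>U\<in>\<beta>. snd U \<le> IP_mass \<beta>" "0 \<le> IP_mass \<beta>"
    by auto
qed

lemma interval_partition_disjoint_family:
  "interval_partition \<beta> \<Longrightarrow> disjoint_family_on (\<lambda>U. {fst U<..<snd U}) \<beta>"
  unfolding interval_partition_def disjoint_family_on_def by (elim conjE) assumption

lemma sum_block_len_le: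
  assumes "interval_partition \<beta>" "finite F" "F \<subseteq> \<beta>" "\<forall>U\<in>\<beta>. snd U \<le> L" "0 \<le> L"
  shows "(\<Sum>U\<in>F. block_len U) \<le> L"
proof -
  have blocks: "fst U < snd U" "0 \<le> fst U" "snd U \<le> L" if "U \<in> F" for U
  proof -
    from that assms(3) have U: "U \<in> \<beta>" by blast
    show "fst U < snd U" "0 \<le> fst U" by (rule interval_partition_block[OF assms(1) U])+
    show "snd U \<le> L" using assms(4) U by blast
  qed
  have "ennreal (\<Sum>U\<in>F. block_len U) = (\<Sum>U\<in>F. ennreal (block_len U))"
    using blocks(1) unfolding block_len_def by (intro sum_ennreal[symmetric]) (simp add: less_imp_le)
  also have "\<dots> = (\<Sum>U\<in>F. emeasure lborel {fst U<..<snd U})"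
    using blocks(1) unfolding block_len_def by (intro sum.cong) (simp_all add: less_imp_le)
  also have "\<dots> = emeasure lborel (\<Union>U\<in>F. {fst U<..<snd U})"
    using disjoint_family_on_mono[OF assms(3) interval_partition_disjoint_family[OF assms(1)]]
      assms(2) by (rule sum_emeasure[rotated]) (simp add: image_subset_iff)
  also have "\<dots> \<le> emeasure lborel {0..L}"
    using blocks(2,3) by (intro emeasure_mono) fastforce+
  finally show ?thesis using assms(5) by simp
qed

lemma sum_block_len_le_IP_mass:
  assumes "interval_partition \<beta>" "finite F" "F \<subseteq> \<beta>" "\<beta> \<noteq> {}"
  shows "(\<Sum>U\<in>F. block_len U) \<le> IP_mass \<beta>"
  using sum_block_len_le[OF assms(1-3)] block_end_le_IP_mass[OF assms(1,4)]
    IP_mass_nonneg[OF assms(1,4)] by blast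

lemma finite_long_blocks:
  assumes "interval_partition \<beta>" "0 < x"
  shows "finite {U\<in>\<beta>. x < block_len U}"
proof (rule ccontr)
  assume inf: "infinite {U\<in>\<beta>. x < block_len U}"
  obtain L where L: "\<forall>U\<in>\<beta>. snd U \<le> L" "0 \<le> L"
    using interval_partition_bound[OF assms(1)] by blast
  obtain B where B: "finite B" "card B = Suc (nat \<lceil>L / x\<rceil>)" "B \<subseteq> {U\<in>\<beta>. x < block_len U}"
    using infinite_arbitrarily_large[OF inf] by blast
  have "real (card B) * x = (\<Sum>U\<in>B. x)" by simp
  also have "\<dots> \<le> (\<Sum>U\<in>B. block_len U)"
    using B(3) by (intro sum_mono) (auto simp: less_imp_le)
  also have "\<dots> \<le> L" using sum_block_len_le[OF assms(1) B(1) _ L] B(3) by blast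
  finally have "real (card B) \<le> L / x" using assms(2) by (simp add: field_simps)
  with B(2) show False by linarith
qed

lemma block_len_summable_on:
  assumes "interval_partition \<beta>"
  shows "block_len summable_on \<beta>"
proof -
  obtain L where L: "\<forall>U\<in>\<beta>. snd U \<le> L" "0 \<le> L"
    using interval_partition_bound[OF assms] by blast
  show ?thesis
  proof (rule nonneg_bdd_above_summable_on)
    show "bdd_above (sum block_len ` {F. F \<subseteq> \<beta> \<and> finite F})"
      using sum_block_len_le[OF assms _ _ L] by (intro bdd_aboveI2) blast
  qed (use block_len_pos[OF assms] less_imp_le in blast)
qed

lemma div_count_nonneg: "0 \<le> h \<Longrightarrow> 0 \<le> div_count \<alpha> \<beta> t h"
  unfolding div_count_def by simp

lemma div_count_mono:
  assumes "interval_partition \<beta>" "0 < h" "t \<le> T"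
  shows "div_count \<alpha> \<beta> t h \<le> div_count \<alpha> \<beta> T h"
proof -
  have "finite {(a,b)\<in>\<beta>. b - a > h \<and> b \<le> T}"
    by (rule finite_subset[OF _ finite_long_blocks[OF assms(1,2)]]) (auto simp: block_len_def)
  then have "card {(a,b)\<in>\<beta>. b - a > h \<and> b \<le> t} \<le> card {(a,b)\<in>\<beta>. b - a > h \<and> b \<le> T}"
    by (rule card_mono) (use assms(3) in auto)
  then show ?thesis unfolding div_count_def by (intro mult_left_mono) auto
qed

lemma div_count_tendsto_Lim:
  assumes "diversity_property \<alpha> \<beta>" "t \<in> {0..IP_mass \<beta>}"
  shows "(div_count \<alpha> \<beta> t \<longlongrightarrow> Lim (at_right 0) (div_count \<alpha> \<beta> t)) (at_right 0)"
proof -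
  obtain l where "(div_count \<alpha> \<beta> t \<longlongrightarrow> l) (at_right 0)"
    using assms unfolding diversity_property_def by blast
  moreover from this have "Lim (at_right 0) (div_count \<alpha> \<beta> t) = l" by (intro tendsto_Lim) auto
  ultimately show ?thesis by simp
qed

lemma diversity_eqI:
  assumes "(div_count \<alpha> \<beta> t \<longlongrightarrow> l) (at_right 0)"
  shows "diversity \<alpha> \<beta> t = Gamma (1 - \<alpha>) * l"
  unfolding diversity_def using tendsto_Lim[OF _ assms] by simp

lemma diversity_nonneg:
  assumes "\<alpha> < 1" "diversity_property \<alpha> \<beta>" "t \<in> {0..IP_mass \<beta>}"
  shows "0 \<le> diversity \<alpha> \<beta> t"
proof -
  have "0 \<le> Lim (at_right 0) (div_count \<alpha> \<beta> t)"
    by (rule tendsto_lowerbound[OF div_count_tendsto_Lim[OF assms(2,3)]])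
      (auto simp: eventually_at_right_less div_count_nonneg
        intro: eventually_mono[OF eventually_at_right_less[of "0::real"]])
  then show ?thesis unfolding diversity_def using assms(1) by simp
qed

lemma diversity_mono:
  assumes "\<alpha> < 1" "interval_partition \<beta>" "diversity_property \<alpha> \<beta>"
    "t \<in> {0..IP_mass \<beta>}" "T \<in> {0..IP_mass \<beta>}" "t \<le> T"
  shows "diversity \<alpha> \<beta> t \<le> diversity \<alpha> \<beta> T"
proof -
  have "Lim (at_right 0) (div_count \<alpha> \<beta> t) \<le> Lim (at_right 0) (div_count \<alpha> \<beta> T)"
    by (rule tendsto_le[OF _ div_count_tendsto_Lim[OF assms(3,5)] div_count_tendsto_Lim[OF assms(3,4)]])
      (auto intro: eventually_mono[OF eventually_at_right_less[of "0::real"]]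
        div_count_mono[OF assms(2) _ assms(6)])
  then show ?thesis unfolding diversity_def using assms(1) by (intro mult_left_mono) auto
qed

lemma
  assumes "\<alpha> < 1" "\<beta> \<in> I_alpha \<alpha>" "U \<in> \<beta>"
  shows block_div_nonneg: "0 \<le> block_div \<alpha> \<beta> U"
    and block_div_le_total_div: "block_div \<alpha> \<beta> U \<le> total_div \<alpha> \<beta>"
proof -
  have ip: "interval_partition \<beta>" and dp: "diversity_property \<alpha> \<beta>"
    using assms(2) unfolding I_alpha_def by auto
  have "(fst U + snd U) / 2 \<in> {0..IP_mass \<beta>}"
    using block_end_le_IP_mass[OF ip] interval_partition_block[OF ip assms(3)] assms(3) by fastforce
  then show "0 \<le> block_div \<alpha> \<beta> U" "block_div \<alpha> \<beta> U \<le> total_div \<alpha> \<beta>"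
    unfolding block_div_def total_div_def
    using diversity_nonneg[OF assms(1) dp] diversity_mono[OF assms(1) ip dp] by auto
qed

definition len_mismatch :: "((real \<times> real) \<times> (real \<times> real)) list \<Rightarrow> real" where
  "len_mismatch cs = (\<Sum>p\<leftarrow>cs. \<bar>block_len (fst p) - block_len (snd p)\<bar>)"

lemma len_mismatch_nonneg: "0 \<le> len_mismatch cs"
  unfolding len_mismatch_def by (induction cs) auto

lemma len_mismatch_swap: "len_mismatch (map prod.swap cs) = len_mismatch cs"
  unfolding len_mismatch_def by (simp add: o_def abs_minus_commute)

lemma correspondence_swap:
  "correspondence \<beta> \<gamma> cs \<Longrightarrow> correspondence \<gamma> \<beta> (map prod.swap cs)"
  unfolding correspondence_def by (auto simp: sorted_wrt_map)

lemma distortion_swap: "distortion \<alpha> \<gamma> \<beta> (map prod.swap cs) = distortion \<alpha> \<beta> \<gamma> cs"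
  unfolding distortion_def Let_def by (simp add: o_def abs_minus_commute insert_commute image_image)

lemma correspondence_subset:
  "correspondence \<beta> \<gamma> cs \<Longrightarrow> fst ` set cs \<subseteq> \<beta>"
  "correspondence \<beta> \<gamma> cs \<Longrightarrow> snd ` set cs \<subseteq> \<gamma>"
  unfolding correspondence_def by auto

lemma sorted_wrt_less_imp_distinct:
  "sorted_wrt (\<lambda>x y. f x < (f y :: 'b :: order)) xs \<Longrightarrow> distinct xs"
  by (induction xs) auto

lemma correspondence_distinct_fst:
  assumes "correspondence \<beta> \<gamma> cs"
  shows "distinct (map fst cs)"
proof -
  have "sorted_wrt (\<lambda>x y. fst x < fst y) (map fst cs)"
    using assms unfolding correspondence_def by (simp add: sorted_wrt_map)
  then show ?thesis by (rule sorted_wrt_less_imp_distinct)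
qed

lemma sum_list_correspondence:
  assumes "correspondence \<beta> \<gamma> cs"
  shows "(\<Sum>p\<leftarrow>cs. g (fst p)) = (\<Sum>U\<in>fst ` set cs. g U)"
  using sum_list_distinct_conv_sum_set[OF correspondence_distinct_fst[OF assms], of g]
  by (simp add: o_def)

lemma
  fixes cs \<alpha> \<beta> \<gamma>
  defines "D \<equiv> distortion \<alpha> \<beta> \<gamma> cs"
  shows distortion_ge_fst: "len_mismatch cs + IP_mass \<beta> - (\<Sum>p\<leftarrow>cs. block_len (fst p)) \<le> D"
    and distortion_ge_total_div: "\<bar>total_div \<alpha> \<beta> - total_div \<alpha> \<gamma>\<bar> \<le> D"
    and distortion_ge_block_div:
      "p \<in> set cs \<Longrightarrow> \<bar>block_div \<alpha> \<beta> (fst p) - block_div \<alpha> \<gamma> (snd p)\<bar> \<le> D"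
    and distortion_nonneg: "0 \<le> D"
proof -
  let ?S = "{ len_mismatch cs + IP_mass \<beta> - (\<Sum>p\<leftarrow>cs. block_len (fst p)),
             len_mismatch cs + IP_mass \<gamma> - (\<Sum>p\<leftarrow>cs. block_len (snd p)),
             \<bar>total_div \<alpha> \<beta> - total_div \<alpha> \<gamma>\<bar> } \<union>
           (\<lambda>p. \<bar>block_div \<alpha> \<beta> (fst p) - block_div \<alpha> \<gamma> (snd p)\<bar>) ` set cs"
  have "D = Max ?S" unfolding D_def distortion_def len_mismatch_def Let_def by simp
  then have le: "x \<le> D" if "x \<in> ?S" for x using Max_ge[OF _ that] by simp
  then show "len_mismatch cs + IP_mass \<beta> - (\<Sum>p\<leftarrow>cs. block_len (fst p)) \<le> D"
    "\<bar>total_div \<alpha> \<beta> - total_div \<alpha> \<gamma>\<bar> \<le> D"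
    "p \<in> set cs \<Longrightarrow> \<bar>block_div \<alpha> \<beta> (fst p) - block_div \<alpha> \<gamma> (snd p)\<bar> \<le> D"
    by auto
  then show "0 \<le> D" by linarith
qed

lemma sum_len_matched_fst_le:
  assumes "interval_partition \<beta>" "correspondence \<beta> \<gamma> cs"
  shows "(\<Sum>p\<leftarrow>cs. block_len (fst p)) \<le> max 0 (IP_mass \<beta>)"
proof (cases "\<beta> = {}")
  case True
  then show ?thesis using correspondence_subset(1)[OF assms(2)] by simp
next
  case False
  then show ?thesis
    using sum_block_len_le_IP_mass[OF assms(1) _ correspondence_subset(1)[OF assms(2)]]
    by (simp add: sum_list_correspondence[OF assms(2)])
qed

lemma len_mismatch_le_distortion:
  assumes "interval_partition \<beta>" "correspondence \<beta> \<gamma> cs"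
  shows "len_mismatch cs \<le> distortion \<alpha> \<beta> \<gamma> cs"
proof (cases "\<beta> = {}")
  case True
  then have "cs = []" using correspondence_subset(1)[OF assms(2)] by simp
  then show ?thesis using distortion_nonneg by (simp add: len_mismatch_def)
next
  case False
  then show ?thesis
    using sum_len_matched_fst_le[OF assms] IP_mass_nonneg[OF assms(1) False]
      distortion_ge_fst[of cs \<beta> \<alpha> \<gamma>] by simp
qed

lemma sum_len_unmatched_fst_le:
  assumes "interval_partition \<beta>" "correspondence \<beta> \<gamma> cs"
    "finite F" "F \<subseteq> \<beta> - fst ` set cs"
  shows "(\<Sum>U\<in>F. block_len U) \<le> distortion \<alpha> \<beta> \<gamma> cs - len_mismatch cs"
proof (cases "\<beta> = {}")
  case True
  then show ?thesis
    using assms(4) len_mismatch_le_distortion[OF assms(1,2)] by auto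
next
  case False
  let ?A = "fst ` set cs"
  have "(\<Sum>U\<in>F. block_len U) + (\<Sum>U\<in>?A. block_len U) = (\<Sum>U\<in>F \<union> ?A. block_len U)"
    using assms(3,4) by (intro sum.union_disjoint[symmetric]) auto
  also have "\<dots> \<le> IP_mass \<beta>"
    using assms(3,4) correspondence_subset(1)[OF assms(2)]
    by (intro sum_block_len_le_IP_mass[OF assms(1) _ _ False]) auto
  finally show ?thesis
    using distortion_ge_fst[of cs \<beta> \<alpha> \<gamma>] sum_list_correspondence[OF assms(2), of block_len]
    by simp
qed

lemma sum_len_unmatched_snd_le:
  assumes "interval_partition \<gamma>" "correspondence \<beta> \<gamma> cs"
    "finite F" "F \<subseteq> \<gamma> - snd ` set cs"
  shows "(\<Sum>U\<in>F. block_len U) \<le> distortion \<alpha> \<beta> \<gamma> cs - len_mismatch cs"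
  using sum_len_unmatched_fst_le[OF assms(1) correspondence_swap[OF assms(2)] assms(3)] assms(4)
  by (simp add: distortion_swap len_mismatch_swap image_image)

lemma d_alpha_lessE:
  assumes "d_alpha \<alpha> \<beta> \<gamma> < \<delta>"
  obtains cs where "correspondence \<beta> \<gamma> cs" "distortion \<alpha> \<beta> \<gamma> cs < \<delta>"
proof -
  have "correspondence \<beta> \<gamma> []" unfolding correspondence_def by simp
  then have "{distortion \<alpha> \<beta> \<gamma> cs |cs. correspondence \<beta> \<gamma> cs} \<noteq> {}" by blast
  from cInf_lessD[OF this assms[unfolded d_alpha_def]] that show ?thesis by blast
qed

lemma cont_wrt_total_div: "cont_wrt A (d_alpha \<alpha>) dist (total_div \<alpha>)"
  unfolding cont_wrt_def
proof (intro ballI allI impI exI conjI)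
  fix \<beta> \<gamma> and \<epsilon> :: real
  assume "0 < \<epsilon>" then show "0 < \<epsilon>" .
  assume "d_alpha \<alpha> \<beta> \<gamma> < \<epsilon>"
  then obtain cs where "distortion \<alpha> \<beta> \<gamma> cs < \<epsilon>" by (rule d_alpha_lessE)
  then show "dist (total_div \<alpha> \<beta>) (total_div \<alpha> \<gamma>) < \<epsilon>"
    using distortion_ge_total_div[of \<alpha> \<beta> \<gamma> cs] by (simp add: dist_real_def)
qed

lemma
  fixes g :: "real \<times> real \<Rightarrow> real"
  assumes "interval_partition \<beta>" "\<And>U. U \<in> \<beta> \<Longrightarrow> \<bar>g U\<bar> \<le> B * block_len U" "S \<subseteq> \<beta>"
  shows summable_on_len_dominated: "g summable_on S"
    and abs_infsum_len_dominated_le: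
      "(\<And>F. finite F \<Longrightarrow> F \<subseteq> S \<Longrightarrow> (\<Sum>U\<in>F. block_len U) \<le> E) \<Longrightarrow> 0 \<le> B
        \<Longrightarrow> \<bar>infsum g S\<bar> \<le> B * E"
proof -
  have len: "block_len summable_on S"
    by (rule summable_on_subset_banach[OF block_len_summable_on[OF assms(1)] assms(3)])
  then have Blen: "(\<lambda>U. B * block_len U) summable_on S"
    by (rule summable_on_cmult_right)
  have abs: "(\<lambda>U. norm (g U)) summable_on S"
    by (rule summable_on_comparison_test[OF Blen]) (use assms(2,3) in auto)
  then show "g summable_on S" by (rule abs_summable_summable)
  assume E: "\<And>F. finite F \<Longrightarrow> F \<subseteq> S \<Longrightarrow> (\<Sum>U\<in>F. block_len U) \<le> E" and "0 \<le> B"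
  have "\<bar>infsum g S\<bar> \<le> infsum (\<lambda>U. norm (g U)) S"
    using norm_infsum_bound[OF abs] by simp
  also have "\<dots> \<le> infsum (\<lambda>U. B * block_len U) S"
    by (rule infsum_mono[OF abs Blen]) (use assms(2,3) in auto)
  also have "\<dots> = B * infsum block_len S"
    by (rule infsum_cmult_right) (use len in auto)
  also have "\<dots> \<le> B * E"
    by (intro mult_left_mono infsum_le_finite_sums len E \<open>0 \<le> B\<close>)
  finally show "\<bar>infsum g S\<bar> \<le> B * E" .
qed

lemma M_summand_le:
  assumes "\<alpha> < 1" "\<beta> \<in> I_alpha \<alpha>" "U \<in> \<beta>" "\<And>x. 0 \<le> x \<Longrightarrow> \<bar>f x\<bar> \<le> B"
  shows "\<bar>block_len U * f (block_div \<alpha> \<beta> U)\<bar> \<le> B * block_len U"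
proof -
  have "0 < block_len U" using block_len_pos assms(2,3) unfolding I_alpha_def by blast
  then show ?thesis
    using assms(4)[OF block_div_nonneg[OF assms(1-3)]] by (simp add: abs_mult mult.commute)
qed

lemma M_integral_minus_matched_le:
  assumes "\<alpha> < 1" "\<beta> \<in> I_alpha \<alpha>" "correspondence \<beta> \<gamma> cs"
    and B: "\<And>x. 0 \<le> x \<Longrightarrow> \<bar>f x\<bar> \<le> B"
  shows "\<bar>M_integral \<alpha> \<beta> f - (\<Sum>p\<leftarrow>cs. block_len (fst p) * f (block_div \<alpha> \<beta> (fst p)))\<bar>
    \<le> B * (distortion \<alpha> \<beta> \<gamma> cs - len_mismatch cs)"
proof -
  define g where "g U = block_len U * f (block_div \<alpha> \<beta> U)" for U
  let ?A = "fst ` set cs"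
  have ip: "interval_partition \<beta>" using assms(2) unfolding I_alpha_def by simp
  have dom: "\<bar>g U\<bar> \<le> B * block_len U" if "U \<in> \<beta>" for U
    unfolding g_def by (rule M_summand_le[OF assms(1,2) that B])
  have A: "?A \<subseteq> \<beta>" "finite ?A" using correspondence_subset(1)[OF assms(3)] by auto
  have "infsum g \<beta> = infsum g (?A \<union> (\<beta> - ?A))" using A(1) by (simp add: Un_absorb1)
  also have "\<dots> = sum g ?A + infsum g (\<beta> - ?A)"
    using summable_on_len_dominated[OF ip dom, of "\<beta> - ?A"] A(2)
    by (subst infsum_Un_disjoint) auto
  finally have "M_integral \<alpha> \<beta> f - (\<Sum>p\<leftarrow>cs. g (fst p)) = infsum g (\<beta> - ?A)"
    unfolding M_integral_def g_def[symmetric] sum_list_correspondence[OF assms(3)] by simp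
  also have "\<bar>\<dots>\<bar> \<le> B * (distortion \<alpha> \<beta> \<gamma> cs - len_mismatch cs)"
    using abs_infsum_len_dominated_le[OF ip dom, of "\<beta> - ?A"] B[of 0]
      sum_len_unmatched_fst_le[OF ip assms(3)] by force
  finally show ?thesis unfolding g_def .
qed

lemma abs_mult_diff_le:
  fixes a b u v :: real
  assumes "0 \<le> b" "\<bar>u\<bar> \<le> B" "\<bar>u - v\<bar> \<le> w"
  shows "\<bar>a * u - b * v\<bar> \<le> B * \<bar>a - b\<bar> + w * b"
proof -
  have "a * u - b * v = (a - b) * u + b * (u - v)" by (simp add: algebra_simps)
  then have "\<bar>a * u - b * v\<bar> \<le> \<bar>a - b\<bar> * \<bar>u\<bar> + b * \<bar>u - v\<bar>"
    using assms(1) by (simp add: abs_mult order_trans[OF abs_triangle_ineq])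
  also have "\<dots> \<le> \<bar>a - b\<bar> * B + b * w"
    using assms by (intro add_mono mult_left_mono) auto
  finally show ?thesis by (simp add: mult.commute)
qed

lemma sum_len_matched_snd_le:
  assumes "interval_partition \<beta>" "correspondence \<beta> \<gamma> cs"
  shows "(\<Sum>p\<leftarrow>cs. block_len (snd p)) \<le> max 0 (IP_mass \<beta>) + distortion \<alpha> \<beta> \<gamma> cs"
proof -
  have "(\<Sum>p\<leftarrow>cs. block_len (snd p))
      \<le> (\<Sum>p\<leftarrow>cs. block_len (fst p) + \<bar>block_len (fst p) - block_len (snd p)\<bar>)"
    by (intro sum_list_mono) auto
  also have "\<dots> = (\<Sum>p\<leftarrow>cs. block_len (fst p)) + len_mismatch cs"
    unfolding len_mismatch_def by (simp add: sum_list_addf)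
  also have "\<dots> \<le> max 0 (IP_mass \<beta>) + distortion \<alpha> \<beta> \<gamma> cs"
    using sum_len_matched_fst_le[OF assms] len_mismatch_le_distortion[OF assms, of \<alpha>] by linarith
  finally show ?thesis .
qed

lemma M_integral_diff_le:
  assumes "\<alpha> < 1" and \<beta>: "\<beta> \<in> I_alpha \<alpha>" and \<gamma>: "\<gamma> \<in> I_alpha \<alpha>"
    and cs: "correspondence \<beta> \<gamma> cs"
    and B: "\<And>x. 0 \<le> x \<Longrightarrow> \<bar>f x\<bar> \<le> B"
    and w: "\<And>p. p \<in> set cs \<Longrightarrow> \<bar>f (block_div \<alpha> \<beta> (fst p)) - f (block_div \<alpha> \<gamma> (snd p))\<bar> \<le> w"
      "0 \<le> w"
  shows "\<bar>M_integral \<alpha> \<beta> f - M_integral \<alpha> \<gamma> f\<bar>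
     \<le> 2 * B * distortion \<alpha> \<beta> \<gamma> cs + w * (max 0 (IP_mass \<beta>) + distortion \<alpha> \<beta> \<gamma> cs)"
proof -
  define D where "D = distortion \<alpha> \<beta> \<gamma> cs"
  define s where "s = len_mismatch cs"
  define x where "x p = block_div \<alpha> \<beta> (fst p)" for p :: "(real \<times> real) \<times> (real \<times> real)"
  define y where "y p = block_div \<alpha> \<gamma> (snd p)" for p :: "(real \<times> real) \<times> (real \<times> real)"
  have ip: "interval_partition \<beta>" "interval_partition \<gamma>" using \<beta> \<gamma> unfolding I_alpha_def by auto
  have "0 \<le> B" using B[of 0] by simp
  have Mb: "\<bar>M_integral \<alpha> \<beta> f - (\<Sum>p\<leftarrow>cs. block_len (fst p) * f (x p))\<bar> \<le> B * (D - s)"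
    unfolding x_def D_def s_def by (rule M_integral_minus_matched_le[OF assms(1) \<beta> cs B])
  have Mg: "\<bar>M_integral \<alpha> \<gamma> f - (\<Sum>p\<leftarrow>cs. block_len (snd p) * f (y p))\<bar> \<le> B * (D - s)"
    using M_integral_minus_matched_le[OF assms(1) \<gamma> correspondence_swap[OF cs] B]
    unfolding x_def y_def D_def s_def by (simp add: distortion_swap len_mismatch_swap o_def)
  have "\<bar>(\<Sum>p\<leftarrow>cs. block_len (fst p) * f (x p)) - (\<Sum>p\<leftarrow>cs. block_len (snd p) * f (y p))\<bar>
      \<le> (\<Sum>p\<leftarrow>cs. \<bar>block_len (fst p) * f (x p) - block_len (snd p) * f (y p)\<bar>)"
    using sum_list_abs[of "map (\<lambda>p. block_len (fst p) * f (x p) - block_len (snd p) * f (y p)) cs"]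
    by (simp add: sum_list_subtractf o_def)
  also have "\<dots> \<le> (\<Sum>p\<leftarrow>cs. B * \<bar>block_len (fst p) - block_len (snd p)\<bar> + w * block_len (snd p))"
  proof (rule sum_list_mono, rule abs_mult_diff_le)
    fix p assume p: "p \<in> set cs"
    then show "0 \<le> block_len (snd p)"
      using block_len_pos[OF ip(2)] correspondence_subset(2)[OF cs] by (meson image_subset_iff less_imp_le)
    show "\<bar>f (x p)\<bar> \<le> B"
      using p B block_div_nonneg[OF assms(1) \<beta>] correspondence_subset(1)[OF cs] unfolding x_def by blast
    show "\<bar>f (x p) - f (y p)\<bar> \<le> w" unfolding x_def y_def by (rule w(1)[OF p])
  qed
  also have "\<dots> = B * s + w * (\<Sum>p\<leftarrow>cs. block_len (snd p))"
    unfolding s_def len_mismatch_def by (simp add: sum_list_addf sum_list_const_mult)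
  also have "\<dots> \<le> B * s + w * (max 0 (IP_mass \<beta>) + D)"
    unfolding D_def using sum_len_matched_snd_le[OF ip(1) cs] w(2)
    by (intro add_left_mono mult_left_mono)
  finally have matched: "\<bar>(\<Sum>p\<leftarrow>cs. block_len (fst p) * f (x p)) - (\<Sum>p\<leftarrow>cs. block_len (snd p) * f (y p))\<bar>
      \<le> B * s + w * (max 0 (IP_mass \<beta>) + D)" .
  have "0 \<le> B * s" using \<open>0 \<le> B\<close> len_mismatch_nonneg[of cs] unfolding s_def by simp
  moreover have "B * (D - s) = B * D - B * s" by (simp add: algebra_simps)
  ultimately show ?thesis using Mb Mg matched unfolding D_def[symmetric] by arith
qed

lemma block_div_matched:
  assumes "\<alpha> < 1" "\<beta> \<in> I_alpha \<alpha>" "\<gamma> \<in> I_alpha \<alpha>" "correspondence \<beta> \<gamma> cs" "p \<in> set cs"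
    "distortion \<alpha> \<beta> \<gamma> cs \<le> 1"
  shows "block_div \<alpha> \<beta> (fst p) \<in> {0..total_div \<alpha> \<beta> + 1}"
    and "block_div \<alpha> \<gamma> (snd p) \<in> {0..total_div \<alpha> \<beta> + 1}"
    and "dist (block_div \<alpha> \<beta> (fst p)) (block_div \<alpha> \<gamma> (snd p)) \<le> distortion \<alpha> \<beta> \<gamma> cs"
proof -
  have "fst p \<in> \<beta>" "snd p \<in> \<gamma>" using correspondence_subset[OF assms(4)] assms(5) by auto
  then have "0 \<le> block_div \<alpha> \<beta> (fst p)" "block_div \<alpha> \<beta> (fst p) \<le> total_div \<alpha> \<beta>"
    "0 \<le> block_div \<alpha> \<gamma> (snd p)"
    using block_div_nonneg[OF assms(1)] block_div_le_total_div[OF assms(1,2)] assms(2,3) by auto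
  moreover have "\<bar>block_div \<alpha> \<beta> (fst p) - block_div \<alpha> \<gamma> (snd p)\<bar> \<le> distortion \<alpha> \<beta> \<gamma> cs"
    by (rule distortion_ge_block_div[OF assms(5)])
  ultimately show "block_div \<alpha> \<beta> (fst p) \<in> {0..total_div \<alpha> \<beta> + 1}"
    and "block_div \<alpha> \<gamma> (snd p) \<in> {0..total_div \<alpha> \<beta> + 1}"
    and "dist (block_div \<alpha> \<beta> (fst p)) (block_div \<alpha> \<gamma> (snd p)) \<le> distortion \<alpha> \<beta> \<gamma> cs"
    using assms(6) by (auto simp: dist_real_def)
qed

lemma cont_wrt_M_integral:
  fixes f :: "real \<Rightarrow> real"
  assumes "\<alpha> < 1" "continuous_on {0..} f" "bounded (f ` {0..})"
  shows "cont_wrt (I_alpha \<alpha>) (d_alpha \<alpha>) dist (\<lambda>\<beta>. M_integral \<alpha> \<beta> f)"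
  unfolding cont_wrt_def
proof (intro ballI allI impI)
  fix \<beta> and \<epsilon> :: real assume \<beta>: "\<beta> \<in> I_alpha \<alpha>" and "0 < \<epsilon>"
  obtain B where B: "\<And>x. 0 \<le> x \<Longrightarrow> \<bar>f x\<bar> \<le> B"
    using assms(3) unfolding bounded_real by auto
  then have "0 \<le> B" by force
  define L where "L = max 0 (IP_mass \<beta>)"
  define w where "w = \<epsilon> / (2 * (L + 1))"
  have "0 \<le> L" "0 < w" unfolding L_def w_def using \<open>0 < \<epsilon>\<close> by auto
  have "uniformly_continuous_on {0..total_div \<alpha> \<beta> + 1} f"
    by (rule compact_uniformly_continuous[OF continuous_on_subset[OF assms(2)]]) auto
  then obtain \<eta> where "\<eta> > 0" and \<eta>: "\<And>x y. x \<in> {0..total_div \<alpha> \<beta> + 1} \<Longrightarrow>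
      y \<in> {0..total_div \<alpha> \<beta> + 1} \<Longrightarrow> dist y x < \<eta> \<Longrightarrow> dist (f y) (f x) < w"
    unfolding uniformly_continuous_on_def using \<open>0 < w\<close> by metis
  define \<delta> where "\<delta> = min 1 (min \<eta> (\<epsilon> / (4 * B + 4)))"
  have "0 < \<delta>" unfolding \<delta>_def using \<open>\<eta> > 0\<close> \<open>0 < \<epsilon>\<close> \<open>0 \<le> B\<close> by auto
  show "\<exists>\<delta>>0. \<forall>\<gamma>\<in>I_alpha \<alpha>. d_alpha \<alpha> \<beta> \<gamma> < \<delta> \<longrightarrow> dist (M_integral \<alpha> \<beta> f) (M_integral \<alpha> \<gamma> f) < \<epsilon>"
  proof (intro exI[of _ \<delta>] conjI ballI impI \<open>0 < \<delta>\<close>)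
    fix \<gamma> assume \<gamma>: "\<gamma> \<in> I_alpha \<alpha>" and "d_alpha \<alpha> \<beta> \<gamma> < \<delta>"
    then obtain cs where cs: "correspondence \<beta> \<gamma> cs" and "distortion \<alpha> \<beta> \<gamma> cs < \<delta>"
      by (blast elim: d_alpha_lessE)
    define D where "D = distortion \<alpha> \<beta> \<gamma> cs"
    have D: "D \<le> 1" "D < \<eta>" "D < \<epsilon> / (4 * B + 4)"
      using \<open>distortion \<alpha> \<beta> \<gamma> cs < \<delta>\<close> unfolding D_def \<delta>_def by auto
    have w: "\<bar>f (block_div \<alpha> \<beta> (fst p)) - f (block_div \<alpha> \<gamma> (snd p))\<bar> \<le> w"
      if p: "p \<in> set cs" for p
    proof -
      note matched = block_div_matched[OF assms(1) \<beta> \<gamma> cs p D(1)[unfolded D_def]]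
      have "dist (block_div \<alpha> \<beta> (fst p)) (block_div \<alpha> \<gamma> (snd p)) < \<eta>"
        using matched(3) D(2) unfolding D_def by linarith
      from \<eta>[OF matched(2,1) this] show ?thesis by (simp add: dist_real_def)
    qed
    have "\<bar>M_integral \<alpha> \<beta> f - M_integral \<alpha> \<gamma> f\<bar> \<le> 2 * B * D + w * (L + D)"
      unfolding D_def L_def
      by (rule M_integral_diff_le[OF assms(1) \<beta> \<gamma> cs B w]) (use \<open>0 < w\<close> in auto)
    also have "\<dots> < \<epsilon> / 2 + \<epsilon> / 2"
    proof (rule add_less_le_mono)
      have "2 * B * D \<le> 2 * B * (\<epsilon> / (4 * B + 4))"
        using D(3) \<open>0 \<le> B\<close> by (intro mult_left_mono) auto
      also have "\<dots> < \<epsilon> / 2" using \<open>0 \<le> B\<close> \<open>0 < \<epsilon>\<close> by (simp add: field_simps)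
      finally show "2 * B * D < \<epsilon> / 2" .
      have "w * (L + D) \<le> w * (L + 1)" using D(1) \<open>0 < w\<close> by simp
      also have "\<dots> = \<epsilon> / 2" unfolding w_def using \<open>0 \<le> L\<close> by (simp add: field_simps)
      finally show "w * (L + D) \<le> \<epsilon> / 2" .
    qed
    finally show "dist (M_integral \<alpha> \<beta> f) (M_integral \<alpha> \<gamma> f) < \<epsilon>"
      by (simp add: dist_real_def)
  qed
qed

definition long_count :: "(real \<times> real) set \<Rightarrow> real \<Rightarrow> nat" where
  "long_count S x = card {U\<in>S. x < block_len U}"

lemma ranked_eq_Inf: "ranked \<beta> k = Inf {x. 0 < x \<and> long_count \<beta> x \<le> k}"
  unfolding ranked_def long_count_def ..

lemma long_count_antimono:
  assumes "interval_partition \<beta>" "0 < x" "x \<le> y"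
  shows "long_count \<beta> y \<le> long_count \<beta> x"
  unfolding long_count_def using assms(3)
  by (intro card_mono finite_long_blocks[OF assms(1,2)]) auto

lemma long_count_eventually_0:
  assumes "interval_partition \<beta>"
  obtains L where "0 < L" "long_count \<beta> L = 0"
proof -
  obtain L where L: "\<forall>U\<in>\<beta>. snd U \<le> L" "0 \<le> L" using interval_partition_bound[OF assms] by blast
  have "block_len U \<le> L" if "U \<in> \<beta>" for U
    using interval_partition_block(1)[OF assms that] bspec[OF L(1) that]
    unfolding block_len_def by linarith
  then have empty: "{U\<in>\<beta>. L + 1 < block_len U} = {}" by fastforce
  have "long_count \<beta> (L + 1) = 0" unfolding long_count_def empty by simp
  with L(2) show ?thesis by (intro that[of "L + 1"]) simp_all
qed

lemma long_count_locally_const: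
  assumes "interval_partition \<beta>" "0 < x"
  obtains x' where "x < x'" "long_count \<beta> x' = long_count \<beta> x"
proof (cases "{U\<in>\<beta>. x < block_len U} = {}")
  case True
  then have "long_count \<beta> x = 0" unfolding long_count_def True by simp
  then show ?thesis using long_count_antimono[OF assms, of "x + 1"] by (intro that[of "x + 1"]) auto
next
  case False
  define m where "m = Min (block_len ` {U\<in>\<beta>. x < block_len U})"
  have fin: "finite {U\<in>\<beta>. x < block_len U}" by (rule finite_long_blocks[OF assms])
  then have "m \<in> block_len ` {U\<in>\<beta>. x < block_len U}" unfolding m_def using False by (intro Min_in) auto
  then have "x < m" by auto
  have "m \<le> block_len U" if "U \<in> \<beta>" "x < block_len U" for U
    unfolding m_def using fin that by simp
  then have "{U\<in>\<beta>. (x + m) / 2 < block_len U} = {U\<in>\<beta>. x < block_len U}"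
    using \<open>x < m\<close> by force
  then show ?thesis using \<open>x < m\<close> by (intro that[of "(x + m) / 2"]) (simp_all add: long_count_def)
qed

lemma ranked_nonneg:
  assumes "interval_partition \<beta>"
  shows "0 \<le> ranked \<beta> k"
proof -
  obtain L where "0 < L" "long_count \<beta> L = 0" by (rule long_count_eventually_0[OF assms])
  then have "{x. 0 < x \<and> long_count \<beta> x \<le> k} \<noteq> {}" by auto
  then show ?thesis unfolding ranked_eq_Inf by (rule cInf_greatest) simp
qed

lemma less_ranked_iff:
  assumes "interval_partition \<beta>" "0 < x"
  shows "x < ranked \<beta> k \<longleftrightarrow> k < long_count \<beta> x"
proof
  assume "x < ranked \<beta> k"
  show "k < long_count \<beta> x"
  proof (rule ccontr)
    assume "\<not> k < long_count \<beta> x"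
    moreover have "bdd_below {x. 0 < x \<and> long_count \<beta> x \<le> k}" by (rule bdd_belowI[of _ 0]) auto
    ultimately have "ranked \<beta> k \<le> x"
      unfolding ranked_eq_Inf using assms(2) by (intro cInf_lower) auto
    with \<open>x < ranked \<beta> k\<close> show False by simp
  qed
next
  assume k: "k < long_count \<beta> x"
  obtain x' where "x < x'" and x': "long_count \<beta> x' = long_count \<beta> x"
    by (rule long_count_locally_const[OF assms])
  have "x' \<le> y" if "0 < y" "long_count \<beta> y \<le> k" for y
  proof (rule ccontr)
    assume "\<not> x' \<le> y"
    then have "long_count \<beta> x' \<le> long_count \<beta> y" using long_count_antimono[OF assms(1) that(1)] by simp
    with that(2) k x' show False by simp
  qed
  moreover obtain L where "0 < L" "long_count \<beta> L = 0" by (rule long_count_eventually_0[OF assms(1)])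
  ultimately have "x' \<le> ranked \<beta> k" unfolding ranked_eq_Inf by (intro cInf_greatest) auto
  with \<open>x < x'\<close> show "x < ranked \<beta> k" by simp
qed

lemma long_count_split:
  assumes "interval_partition \<beta>" "0 < x" "A \<subseteq> \<beta>" "finite A"
  shows "real (long_count \<beta> x)
    = (\<Sum>U\<in>A. if x < block_len U then 1 else 0) + real (long_count (\<beta> - A) x)"
proof -
  have fin: "finite {U\<in>\<beta>. x < block_len U}" by (rule finite_long_blocks[OF assms(1,2)])
  have "{U\<in>\<beta>. x < block_len U} = {U\<in>A. x < block_len U} \<union> {U\<in>\<beta> - A. x < block_len U}"
    using assms(3) by auto
  then have "long_count \<beta> x = card {U\<in>A. x < block_len U} + card {U\<in>\<beta> - A. x < block_len U}"
    unfolding long_count_def by (auto intro: card_Un_disjoint finite_subset[OF _ fin])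
  then show ?thesis
    using assms(4) by (simp add: long_count_def sum.If_cases Int_def conj_commute)
qed

lemma long_count_finite_eq_sum:
  assumes "finite F"
  shows "ennreal (indicator {0<..} x * real (long_count F x))
    = (\<Sum>U\<in>F. ennreal (indicator {0<..<block_len U} x))"
proof -
  have "indicator {0<..} x * real (long_count F x) = (\<Sum>U\<in>F. indicator {0<..<block_len U} x)"
    using assms by (auto simp: long_count_def indicator_def sum.If_cases Int_def conj_commute)
  then show ?thesis by (simp add: sum_ennreal)
qed

lemma nn_integral_long_count_finite:
  assumes "finite F" "\<And>U. U \<in> F \<Longrightarrow> 0 \<le> block_len U"
  shows "(\<integral>\<^sup>+ x. ennreal (indicator {0<..} x * real (long_count F x)) \<partial>lborel)
    = ennreal (\<Sum>U\<in>F. block_len U)"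
proof -
  have "(\<integral>\<^sup>+ x. ennreal (indicator {0<..} x * real (long_count F x)) \<partial>lborel)
      = (\<Sum>U\<in>F. \<integral>\<^sup>+ x. ennreal (indicator {0<..<block_len U} x) \<partial>lborel)"
    unfolding long_count_finite_eq_sum[OF assms(1)] by (rule nn_integral_sum) simp
  also have "\<dots> = (\<Sum>U\<in>F. ennreal (block_len U))"
    using assms(2) by (intro sum.cong) (auto simp: ennreal_indicator)
  finally show ?thesis using assms(2) by (simp add: sum_ennreal)
qed

lemma long_count_SUP:
  assumes "interval_partition \<beta>" "S \<subseteq> \<beta>"
  shows "ennreal (indicator {0<..} x * real (long_count S x))
    = (SUP m. ennreal (indicator {0<..} x * real (long_count {U\<in>S. 1 / Suc m < block_len U} x)))"
proof (cases "0 < x")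
  case True
  then obtain m0 where m0: "1 / real (Suc m0) < x"
    by (metis reals_Archimedean of_nat_Suc inverse_eq_divide)
  have "{U\<in>{U\<in>S. 1 / Suc m0 < block_len U}. x < block_len U} = {U\<in>S. x < block_len U}"
    using m0 by auto
  moreover have "finite {U\<in>S. x < block_len U}"
    using assms(2) by (intro finite_subset[OF _ finite_long_blocks[OF assms(1) True]]) auto
  then have "long_count {U\<in>S. 1 / Suc m < block_len U} x \<le> long_count S x" for m
    unfolding long_count_def by (intro card_mono) auto
  ultimately show ?thesis
    by (intro antisym SUP_upper2[of m0] SUP_least ennreal_leI mult_left_mono)
      (auto simp: long_count_def)
qed simp

lemma
  assumes "interval_partition \<beta>" "S \<subseteq> \<beta>"
    and E: "\<And>F. finite F \<Longrightarrow> F \<subseteq> S \<Longrightarrow> (\<Sum>U\<in>F. block_len U) \<le> E"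
  shows borel_measurable_long_count:
      "(\<lambda>x. ennreal (indicator {0<..} x * real (long_count S x))) \<in> borel_measurable lborel"
    and nn_integral_long_count_le:
      "(\<integral>\<^sup>+ x. ennreal (indicator {0<..} x * real (long_count S x)) \<partial>lborel) \<le> ennreal E"
proof -
  define S' where "S' m = {U\<in>S. 1 / Suc m < block_len U}" for m :: nat
  define f where "f m x = ennreal (indicator {0<..} x * real (long_count (S' m) x))" for m x
  have fin: "finite (S' m)" for m
    unfolding S'_def using assms(2) by (intro finite_subset[OF _ finite_long_blocks[OF assms(1)]]) auto
  have "S' m \<subseteq> S' n" if "m \<le> n" for m n
    using that unfolding S'_def by (auto intro: le_less_trans[rotated] simp: frac_le)
  then have "long_count (S' m) x \<le> long_count (S' n) x" if "m \<le> n" for m n x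
    unfolding long_count_def using that fin by (intro card_mono) auto
  then have "incseq f"
    unfolding f_def by (intro incseq_SucI le_funI ennreal_leI mult_left_mono) auto
  have meas: "f m \<in> borel_measurable lborel" for m
    unfolding f_def long_count_finite_eq_sum[OF fin] by simp
  have eq: "(\<lambda>x. ennreal (indicator {0<..} x * real (long_count S x))) = (\<lambda>x. SUP m. f m x)"
    unfolding f_def S'_def using long_count_SUP[OF assms(1,2)] by simp
  show "(\<lambda>x. ennreal (indicator {0<..} x * real (long_count S x))) \<in> borel_measurable lborel"
    unfolding eq using meas by measurable
  have "(\<integral>\<^sup>+ x. ennreal (indicator {0<..} x * real (long_count S x)) \<partial>lborel)
      = (SUP m. \<integral>\<^sup>+ x. f m x \<partial>lborel)"
    unfolding eq by (rule nn_integral_monotone_convergence_SUP[OF \<open>incseq f\<close> meas])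
  also have "\<dots> \<le> ennreal E"
  proof (rule SUP_least)
    fix m
    have "0 \<le> block_len U" if "U \<in> S' m" for U
      using that assms(2) block_len_pos[OF assms(1)] unfolding S'_def by (blast intro: less_imp_le)
    then have "(\<integral>\<^sup>+ x. f m x \<partial>lborel) = ennreal (\<Sum>U\<in>S' m. block_len U)"
      unfolding f_def by (rule nn_integral_long_count_finite[OF fin])
    also have "\<dots> \<le> ennreal E" using E[OF fin] unfolding S'_def by (intro ennreal_leI) auto
    finally show "(\<integral>\<^sup>+ x. f m x \<partial>lborel) \<le> ennreal E" .
  qed
  finally show "(\<integral>\<^sup>+ x. ennreal (indicator {0<..} x * real (long_count S x)) \<partial>lborel) \<le> ennreal E" .
qed

lemma sum_less_xor_le:
  fixes n1 n2 :: nat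
  shows "(\<Sum>k<K. if (k < n1) \<noteq> (k < n2) then 1 else 0 :: real) \<le> \<bar>real n1 - real n2\<bar>"
proof -
  have "(\<Sum>k<K. if (k < n1) \<noteq> (k < n2) then 1 else 0 :: real)
      = real (card ({..<K} \<inter> {min n1 n2..<max n1 n2}))"
    by (simp add: sum.If_cases Int_def) (intro arg_cong[where f=card] Collect_cong; auto)
  also have "\<dots> \<le> real (card {min n1 n2..<max n1 n2})"
    by (intro of_nat_mono card_mono) auto
  also have "\<dots> = \<bar>real n1 - real n2\<bar>" by (simp add: max_def min_def of_nat_diff)
  finally show ?thesis .
qed

definition levels_between :: "real \<Rightarrow> real \<Rightarrow> real set" where
  "levels_between r q = {min r q..<max r q}"

lemma indicator_levels_between: "indicator (levels_between r q) x = (if (x < r) \<noteq> (x < q) then 1 else 0 :: real)"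
  unfolding levels_between_def by (auto simp: indicator_def min_def max_def)

lemma nn_integral_levels_between: "(\<integral>\<^sup>+ x. ennreal (indicator (levels_between r q) x) \<partial>lborel) = ennreal \<bar>r - q\<bar>"
  unfolding levels_between_def by (simp add: ennreal_indicator max_def min_def)

text \<open>At a level \<open>x > 0\<close> the left-hand side counts the \<open>k\<close> for which \<open>x\<close> separates the
  \<open>k\<close>-th ranked lengths, i.e. \<open>k\<close> lies between the numbers of blocks of \<open>\<beta>\<close> and of \<open>\<gamma>\<close> that
  are longer than \<open>x\<close>; a matched pair changes the difference of these numbers only if \<open>x\<close>
  separates its two lengths.\<close>

lemma count_ranked_between_le:
  assumes \<beta>: "interval_partition \<beta>" and \<gamma>: "interval_partition \<gamma>"
    and cs: "correspondence \<beta> \<gamma> cs" and "0 < x"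
  shows "(\<Sum>k<K. indicator (levels_between (ranked \<beta> k) (ranked \<gamma> k)) x)
    \<le> (\<Sum>p\<in>set cs. indicator (levels_between (block_len (fst p)) (block_len (snd p))) x)
      + real (long_count (\<beta> - fst ` set cs) x) + real (long_count (\<gamma> - snd ` set cs) x)"
proof -
  define long where "long U = (if x < block_len U then 1 else 0 :: real)" for U
  have inj: "inj_on fst (set cs)" "inj_on snd (set cs)"
    using correspondence_distinct_fst[OF cs] correspondence_distinct_fst[OF correspondence_swap[OF cs]]
    by (simp_all add: distinct_map o_def)
  have "(\<Sum>k<K. indicator (levels_between (ranked \<beta> k) (ranked \<gamma> k)) x)
      = (\<Sum>k<K. if (k < long_count \<beta> x) \<noteq> (k < long_count \<gamma> x) then 1 else 0 :: real)"
    unfolding indicator_levels_between less_ranked_iff[OF \<beta> \<open>0 < x\<close>] less_ranked_iff[OF \<gamma> \<open>0 < x\<close>] ..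
  also have "\<dots> \<le> \<bar>real (long_count \<beta> x) - real (long_count \<gamma> x)\<bar>"
    by (rule sum_less_xor_le)
  finally have xor: "(\<Sum>k<K. indicator (levels_between (ranked \<beta> k) (ranked \<gamma> k)) x)
      \<le> \<bar>real (long_count \<beta> x) - real (long_count \<gamma> x)\<bar>" .
  have "real (long_count \<beta> x) = (\<Sum>p\<in>set cs. long (fst p)) + real (long_count (\<beta> - fst ` set cs) x)"
    using long_count_split[OF \<beta> \<open>0 < x\<close> correspondence_subset(1)[OF cs]]
    by (simp add: sum.reindex[OF inj(1)] long_def)
  moreover have "real (long_count \<gamma> x) = (\<Sum>p\<in>set cs. long (snd p)) + real (long_count (\<gamma> - snd ` set cs) x)"
    using long_count_split[OF \<gamma> \<open>0 < x\<close> correspondence_subset(2)[OF cs]]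
    by (simp add: sum.reindex[OF inj(2)] long_def)
  moreover have "\<bar>(\<Sum>p\<in>set cs. long (fst p)) - (\<Sum>p\<in>set cs. long (snd p))\<bar>
      \<le> (\<Sum>p\<in>set cs. \<bar>long (fst p) - long (snd p)\<bar>)"
    unfolding sum_subtractf[symmetric] by (rule sum_abs)
  moreover have "(\<Sum>p\<in>set cs. \<bar>long (fst p) - long (snd p)\<bar>)
      = (\<Sum>p\<in>set cs. indicator (levels_between (block_len (fst p)) (block_len (snd p))) x)"
    unfolding indicator_levels_between long_def by (intro sum.cong) simp_all
  ultimately show ?thesis using xor by arith
qed

lemma nn_integral_len_mismatch:
  assumes "correspondence \<beta> \<gamma> cs"
  shows "(\<integral>\<^sup>+ x. ennreal (\<Sum>p\<in>set cs. indicator (levels_between (block_len (fst p)) (block_len (snd p))) x) \<partial>lborel)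
    = ennreal (len_mismatch cs)"
proof -
  have "(\<integral>\<^sup>+ x. ennreal (\<Sum>p\<in>set cs. indicator (levels_between (block_len (fst p)) (block_len (snd p))) x) \<partial>lborel)
      = (\<integral>\<^sup>+ x. (\<Sum>p\<in>set cs. ennreal (indicator (levels_between (block_len (fst p)) (block_len (snd p))) x)) \<partial>lborel)"
    by (intro nn_integral_cong sum_ennreal[symmetric]) simp
  also have "\<dots> = (\<Sum>p\<in>set cs. \<integral>\<^sup>+ x. ennreal (indicator (levels_between (block_len (fst p)) (block_len (snd p))) x) \<partial>lborel)"
    by (rule nn_integral_sum) (simp add: levels_between_def)
  also have "\<dots> = ennreal (\<Sum>p\<in>set cs. \<bar>block_len (fst p) - block_len (snd p)\<bar>)"
    by (simp add: nn_integral_levels_between)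
  also have "(\<Sum>p\<in>set cs. \<bar>block_len (fst p) - block_len (snd p)\<bar>) = len_mismatch cs"
    using correspondence_distinct_fst[OF assms] unfolding len_mismatch_def
    by (simp add: distinct_map sum_list_distinct_conv_sum_set)
  finally show ?thesis .
qed

lemma sum_abs_ranked_diff_le:
  assumes \<beta>: "interval_partition \<beta>" and \<gamma>: "interval_partition \<gamma>"
    and cs: "correspondence \<beta> \<gamma> cs"
    and E1: "\<And>F. finite F \<Longrightarrow> F \<subseteq> \<beta> - fst ` set cs \<Longrightarrow> (\<Sum>U\<in>F. block_len U) \<le> E1"
    and E2: "\<And>F. finite F \<Longrightarrow> F \<subseteq> \<gamma> - snd ` set cs \<Longrightarrow> (\<Sum>U\<in>F. block_len U) \<le> E2"
  shows "(\<Sum>k<K. \<bar>ranked \<beta> k - ranked \<gamma> k\<bar>) \<le> len_mismatch cs + E1 + E2"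
proof -
  define R :: "nat \<Rightarrow> real \<Rightarrow> real" where "R k x = indicator (levels_between (ranked \<beta> k) (ranked \<gamma> k)) x" for k x
  define P where "P x = (\<Sum>p\<in>set cs. indicator (levels_between (block_len (fst p)) (block_len (snd p))) x :: real)" for x
  define c1 where "c1 x = indicator {0<..} x * real (long_count (\<beta> - fst ` set cs) x)" for x
  define c2 where "c2 x = indicator {0<..} x * real (long_count (\<gamma> - snd ` set cs) x)" for x
  have "0 \<le> E1" "0 \<le> E2" using E1[of "{}"] E2[of "{}"] by simp_all
  have c1: "(\<lambda>x. ennreal (c1 x)) \<in> borel_measurable lborel" "(\<integral>\<^sup>+ x. ennreal (c1 x) \<partial>lborel) \<le> E1"
    unfolding c1_def using borel_measurable_long_count[OF \<beta> _ E1] nn_integral_long_count_le[OF \<beta> _ E1]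
    by auto
  have c2: "(\<lambda>x. ennreal (c2 x)) \<in> borel_measurable lborel" "(\<integral>\<^sup>+ x. ennreal (c2 x) \<partial>lborel) \<le> E2"
    unfolding c2_def using borel_measurable_long_count[OF \<gamma> _ E2] nn_integral_long_count_le[OF \<gamma> _ E2]
    by auto
  have P: "(\<lambda>x. ennreal (P x)) \<in> borel_measurable lborel" unfolding P_def levels_between_def by simp
  have pointwise: "(\<Sum>k<K. ennreal (R k x)) \<le> ennreal (P x) + ennreal (c1 x) + ennreal (c2 x)"
    if "x \<noteq> 0" for x
  proof -
    have "(\<Sum>k<K. R k x) \<le> P x + c1 x + c2 x"
    proof (cases "0 < x")
      case True
      then show ?thesis
        unfolding R_def P_def c1_def c2_def using count_ranked_between_le[OF \<beta> \<gamma> cs True] by simp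
    next
      case False
      then have "R k x = 0" for k
        using ranked_nonneg[OF \<beta>, of k] ranked_nonneg[OF \<gamma>, of k] \<open>x \<noteq> 0\<close>
        unfolding R_def indicator_levels_between by auto
      then show ?thesis unfolding P_def c1_def c2_def by (simp add: sum_nonneg)
    qed
    then have "ennreal (\<Sum>k<K. R k x) \<le> ennreal (P x + c1 x + c2 x)" by (rule ennreal_leI)
    then show ?thesis
      unfolding P_def c1_def c2_def R_def by (simp add: sum_ennreal sum_nonneg ennreal_plus)
  qed
  have "ennreal (\<Sum>k<K. \<bar>ranked \<beta> k - ranked \<gamma> k\<bar>) = (\<Sum>k<K. \<integral>\<^sup>+ x. ennreal (R k x) \<partial>lborel)"
    unfolding R_def nn_integral_levels_between by (simp add: sum_ennreal)
  also have "\<dots> = (\<integral>\<^sup>+ x. (\<Sum>k<K. ennreal (R k x)) \<partial>lborel)"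
    by (rule nn_integral_sum[symmetric]) (simp add: R_def levels_between_def)
  also have "\<dots> \<le> (\<integral>\<^sup>+ x. ennreal (P x) + ennreal (c1 x) + ennreal (c2 x) \<partial>lborel)"
    using pointwise by (intro nn_integral_mono_AE) (auto intro: AE_mp[OF AE_lborel_singleton[of 0]])
  also have "\<dots> = (\<integral>\<^sup>+ x. ennreal (P x) \<partial>lborel) + (\<integral>\<^sup>+ x. ennreal (c1 x) \<partial>lborel)
      + (\<integral>\<^sup>+ x. ennreal (c2 x) \<partial>lborel)"
    using P c1(1) c2(1) by (simp add: nn_integral_add)
  also have "\<dots> \<le> ennreal (len_mismatch cs) + ennreal E1 + ennreal E2"
    using c1(2) c2(2) nn_integral_len_mismatch[OF cs] unfolding P_def by (intro add_mono) auto
  also have "\<dots> = ennreal (len_mismatch cs + E1 + E2)"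
    using len_mismatch_nonneg[of cs] \<open>0 \<le> E1\<close> \<open>0 \<le> E2\<close> by (simp add: ennreal_plus)
  finally show ?thesis
    using len_mismatch_nonneg[of cs] \<open>0 \<le> E1\<close> \<open>0 \<le> E2\<close> by (subst (asm) ennreal_le_iff) auto
qed

lemma interval_partition_empty: "interval_partition {}"
  unfolding interval_partition_def by (auto intro!: exI[of _ 0] countable_imp_null_set_lborel)

lemma ranked_empty: "ranked {} k = 0"
proof (rule antisym)
  show "ranked {} k \<le> 0"
  proof (rule ccontr)
    assume "\<not> ranked {} k \<le> 0"
    then have "0 < ranked {} k / 2" "ranked {} k / 2 < ranked {} k" by simp_all
    with less_ranked_iff[OF interval_partition_empty, of "ranked {} k / 2" k] show False
      by (simp add: long_count_def)
  qed
qed (rule ranked_nonneg[OF interval_partition_empty])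

lemma summable_ranked:
  assumes "interval_partition \<beta>"
  shows "summable (ranked \<beta>)"
proof -
  obtain L where L: "\<forall>U\<in>\<beta>. snd U \<le> L" "0 \<le> L"
    using interval_partition_bound[OF assms] by blast
  have "(\<Sum>k<n. \<bar>ranked \<beta> k - ranked {} k\<bar>) \<le> len_mismatch [] + L + 0" for n
    using sum_block_len_le[OF assms _ _ L]
    by (intro sum_abs_ranked_diff_le[OF assms interval_partition_empty]) (auto simp: correspondence_def)
  then have "(\<Sum>k<n. ranked \<beta> k) \<le> L" for n
    using ranked_nonneg[OF assms] by (simp add: ranked_empty len_mismatch_def)
  then show ?thesis by (rule summableI_nonneg_bounded[OF ranked_nonneg[OF assms]])
qed

lemma cont_wrt_ranked: "cont_wrt (I_alpha \<alpha>) (d_alpha \<alpha>) (\<lambda>x y. \<Sum>k. \<bar>x k - y k\<bar>) ranked"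
  unfolding cont_wrt_def
proof (intro ballI allI impI exI conjI)
  fix \<beta> \<gamma> and \<epsilon> :: real
  assume "0 < \<epsilon>" then show "0 < \<epsilon> / 2" by simp
  assume "\<beta> \<in> I_alpha \<alpha>" "\<gamma> \<in> I_alpha \<alpha>" "d_alpha \<alpha> \<beta> \<gamma> < \<epsilon> / 2"
  then have \<beta>: "interval_partition \<beta>" and \<gamma>: "interval_partition \<gamma>"
    unfolding I_alpha_def by auto
  obtain cs where cs: "correspondence \<beta> \<gamma> cs" and D: "distortion \<alpha> \<beta> \<gamma> cs < \<epsilon> / 2"
    using \<open>d_alpha \<alpha> \<beta> \<gamma> < \<epsilon> / 2\<close> by (rule d_alpha_lessE)
  define s where "s = len_mismatch cs"
  have bound_s: "(\<Sum>k<K. \<bar>ranked \<beta> k - ranked \<gamma> k\<bar>)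
      \<le> s + (distortion \<alpha> \<beta> \<gamma> cs - s) + (distortion \<alpha> \<beta> \<gamma> cs - s)" for K
    unfolding s_def
    by (rule sum_abs_ranked_diff_le[OF \<beta> \<gamma> cs sum_len_unmatched_fst_le[OF \<beta> cs] sum_len_unmatched_snd_le[OF \<gamma> cs]])
  have bound: "(\<Sum>k<K. \<bar>ranked \<beta> k - ranked \<gamma> k\<bar>) \<le> 2 * distortion \<alpha> \<beta> \<gamma> cs" for K
    using bound_s[of K] len_mismatch_nonneg[of cs] unfolding s_def by linarith
  have "(\<Sum>k. \<bar>ranked \<beta> k - ranked \<gamma> k\<bar>) \<le> 2 * distortion \<alpha> \<beta> \<gamma> cs"
    using summableI_nonneg_bounded[of "\<lambda>k. \<bar>ranked \<beta> k - ranked \<gamma> k\<bar>", OF _ bound]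
    by (intro suminf_le_const bound) auto
  also have "\<dots> < \<epsilon>" using D by simp
  finally show "(\<Sum>k. \<bar>ranked \<beta> k - ranked \<gamma> k\<bar>) < \<epsilon>" .
qed

definition seq_blocks :: "(nat \<Rightarrow> real) \<Rightarrow> (real \<times> real) set" where
  "seq_blocks s = {(s n, s (Suc n)) | n. s n < s (Suc n)}"

locale cut_points =
  fixes s :: "nat \<Rightarrow> real" and L :: real
  assumes mono: "mono s" and start: "s 0 = 0" and lim: "s \<longlonglongrightarrow> L"
begin

lemma le_lim: "s n \<le> L"
  using incseq_le[OF mono lim] .

lemma nonneg: "0 \<le> s n"
  using mono start by (metis le0 monoD)

lemma exists_above: "x < L \<Longrightarrow> \<exists>M. x < s M"
  using order_tendstoD(1)[OF lim] by (metis eventually_sequentially order_refl)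

lemma not_in_block: "s k \<notin> {s n<..<s (Suc n)}"
  using mono by (cases "k \<le> n") (auto simp: not_le dest: monoD[of s k n] monoD[of s "Suc n" k])

lemma blocks_disjoint:
  assumes "U \<in> seq_blocks s" "V \<in> seq_blocks s" "U \<noteq> V"
  shows "{fst U<..<snd U} \<inter> {fst V<..<snd V} = {}"
proof -
  obtain m n where U: "U = (s m, s (Suc m))" and V: "V = (s n, s (Suc n))" and "m \<noteq> n"
    using assms unfolding seq_blocks_def by auto
  then have "s (Suc m) \<le> s n \<or> s (Suc n) \<le> s m"
    using mono by (metis Suc_leI linorder_neqE_nat monoD)
  then show ?thesis unfolding U V by auto
qed

lemma complement_blocks: "{0..L} - (\<Union>(a,b)\<in>seq_blocks s. {a<..<b}) = range s \<union> {L}"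
proof (intro equalityI subsetI)
  fix x assume x: "x \<in> {0..L} - (\<Union>(a,b)\<in>seq_blocks s. {a<..<b})"
  show "x \<in> range s \<union> {L}"
  proof (rule ccontr)
    assume "x \<notin> range s \<union> {L}"
    with x have "x < L" by auto
    then have ex: "\<exists>M. x < s M" by (rule exists_above)
    define M where "M = (LEAST M. x < s M)"
    have "x < s M" unfolding M_def using ex by (rule LeastI_ex)
    moreover have "M \<noteq> 0" using \<open>x < s M\<close> x start by (auto intro: ccontr)
    then have "\<not> x < s (M - 1)" unfolding M_def by (intro not_less_Least) simp
    ultimately have "x \<in> {s (M - 1)<..<s (Suc (M - 1))}" "s (M - 1) < s (Suc (M - 1))"
      using \<open>x \<notin> range s \<union> {L}\<close> \<open>M \<noteq> 0\<close> by auto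
    with x show False unfolding seq_blocks_def by blast
  qed
next
  fix x assume "x \<in> range s \<union> {L}"
  then consider k where "x = s k" | "x = L" by auto
  then show "x \<in> {0..L} - (\<Union>(a,b)\<in>seq_blocks s. {a<..<b})"
  proof cases
    case 1
    then show ?thesis using nonneg le_lim not_in_block unfolding seq_blocks_def by auto
  next
    case 2
    have "0 \<le> L" using nonneg[of 0] le_lim[of 0] by linarith
    with 2 show ?thesis using le_lim unfolding seq_blocks_def by (auto simp: not_less)
  qed
qed

lemma interval_partition_seq_blocks: "interval_partition (seq_blocks s)"
  unfolding interval_partition_def
proof (intro conjI exI)
  show "\<forall>(a, b)\<in>seq_blocks s. 0 \<le> a \<and> a < b"
    unfolding seq_blocks_def using nonneg by auto
  show "\<forall>U\<in>seq_blocks s. \<forall>V\<in>seq_blocks s. U \<noteq> V \<longrightarrow> {fst U<..<snd U} \<inter> {fst V<..<snd V} = {}"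
    using blocks_disjoint by blast
  show "\<forall>(a, b)\<in>seq_blocks s. b \<le> L" unfolding seq_blocks_def using le_lim by auto
  show "{0..L} - (\<Union>(a, b)\<in>seq_blocks s. {a<..<b}) \<in> null_sets lborel"
    unfolding complement_blocks by (intro countable_imp_null_set_lborel) auto
qed

lemma IP_mass_seq_blocks: "seq_blocks s \<noteq> {} \<Longrightarrow> IP_mass (seq_blocks s) = L"
  using complement_blocks le_lim
  by (intro IP_mass_eqI[OF interval_partition_seq_blocks]) (auto simp: seq_blocks_def countable_imp_null_set_lborel)

lemma C_set_seq_blocks: "seq_blocks s \<noteq> {} \<Longrightarrow> C_set (seq_blocks s) = range s \<union> {L}"
  unfolding C_set_def IP_mass_seq_blocks complement_blocks ..

end

lemma tendsto_powr_at_right_0: "0 < a \<Longrightarrow> ((\<lambda>h::real. h powr a) \<longlongrightarrow> 0) (at_right 0)"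
  by (rule tendsto_zero_powrI[where b=a])
    (auto simp: tendsto_ident_at intro: eventually_mono[OF eventually_at_right_less[of "0::real"]])

lemma div_count_tendsto_0:
  assumes "0 < \<alpha>" "finite {U\<in>\<beta>. snd U \<le> t}"
  shows "(div_count \<alpha> \<beta> t \<longlongrightarrow> 0) (at_right 0)"
proof (rule tendsto_sandwich[of "\<lambda>_. 0" _ _ "\<lambda>h. h powr \<alpha> * real (card {U\<in>\<beta>. snd U \<le> t})"])
  show "\<forall>\<^sub>F h in at_right 0. 0 \<le> div_count \<alpha> \<beta> t h"
    by (simp add: div_count_def)
  have "card {(a,b)\<in>\<beta>. b - a > h \<and> b \<le> t} \<le> card {U\<in>\<beta>. snd U \<le> t}" for h
    using assms(2) by (intro card_mono) auto
  then show "\<forall>\<^sub>F h in at_right 0. div_count \<alpha> \<beta> t h \<le> h powr \<alpha> * real (card {U\<in>\<beta>. snd U \<le> t})"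
    unfolding div_count_def by (intro always_eventually allI mult_left_mono) auto
  show "((\<lambda>h. h powr \<alpha> * real (card {U\<in>\<beta>. snd U \<le> t})) \<longlongrightarrow> 0) (at_right 0)"
    using tendsto_mult[OF tendsto_powr_at_right_0[OF assms(1)] tendsto_const] by simp
qed simp

lemma hausdorff_dist_le:
  assumes "S \<noteq> {}" "T \<noteq> {}"
    "\<And>x. x \<in> S \<Longrightarrow> \<exists>y\<in>T. dist x y \<le> e" "\<And>y. y \<in> T \<Longrightarrow> \<exists>x\<in>S. dist y x \<le> e"
  shows "hausdorff_dist S T \<le> e"
  unfolding hausdorff_dist_def
  using assms by (intro max.boundedI cSUP_least) (auto intro: infdist_le2)

text \<open>The block lengths \<open>(n + 1) powr (-1/\<alpha>)\<close> are chosen so that the number of them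
  exceeding \<open>h\<close> differs from \<open>h powr (-\<alpha>)\<close> by less than \<open>1\<close>. Placed left to right they
  accumulate only at the right endpoint, so the diversity is \<open>0\<close> before it and
  \<open>\<Gamma>(1 - \<alpha>)\<close> at it.\<close>

definition diverse_len :: "real \<Rightarrow> nat \<Rightarrow> real" where
  "diverse_len \<alpha> n = (real n + 1) powr (-1/\<alpha>)"

definition diverse_seq :: "real \<Rightarrow> nat \<Rightarrow> real" where
  "diverse_seq \<alpha> n = (\<Sum>k<n. diverse_len \<alpha> k)"

definition truncated_seq :: "real \<Rightarrow> nat \<Rightarrow> nat \<Rightarrow> real" where
  "truncated_seq \<alpha> N n = (if n \<le> N then diverse_seq \<alpha> n else suminf (diverse_len \<alpha>))"

lemma diverse_len_pos: "0 < diverse_len \<alpha> n"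
  unfolding diverse_len_def by simp

lemma less_diverse_len_iff:
  assumes "0 < \<alpha>" "0 < h"
  shows "h < diverse_len \<alpha> n \<longleftrightarrow> real n + 1 < h powr (-\<alpha>)"
proof -
  define z where "z = real n + 1"
  have "0 < z" unfolding z_def by simp
  have "h < z powr (-1/\<alpha>) \<longleftrightarrow> z < h powr (-\<alpha>)"
  proof
    assume "h < z powr (-1/\<alpha>)"
    then have "(z powr (-1/\<alpha>)) powr (-\<alpha>) < h powr (-\<alpha>)"
      using assms by (intro powr_less_mono2_neg) auto
    then show "z < h powr (-\<alpha>)" using assms \<open>0 < z\<close> by (simp add: powr_powr)
  next
    assume "z < h powr (-\<alpha>)"
    then have "(h powr (-\<alpha>)) powr (-1/\<alpha>) < z powr (-1/\<alpha>)"
      using assms \<open>0 < z\<close> by (intro powr_less_mono2_neg) auto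
    then show "h < z powr (-1/\<alpha>)" using assms by (simp add: powr_powr)
  qed
  then show ?thesis unfolding diverse_len_def z_def .
qed

lemma card_diverse_len_greater:
  assumes "0 < \<alpha>" "0 < h"
  shows "h powr (-\<alpha>) - 1 \<le> card {n. h < diverse_len \<alpha> n}"
    and "card {n. h < diverse_len \<alpha> n} \<le> h powr (-\<alpha>)"
proof -
  have "n \<in> {n. h < diverse_len \<alpha> n} \<longleftrightarrow> n \<in> {..< nat \<lceil>h powr (-\<alpha>) - 1\<rceil>}" for n
  proof -
    have "h < diverse_len \<alpha> n \<longleftrightarrow> real n < h powr (-\<alpha>) - 1"
      unfolding less_diverse_len_iff[OF assms] by arith
    also have "\<dots> \<longleftrightarrow> int n < \<lceil>h powr (-\<alpha>) - 1\<rceil>"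
      unfolding less_ceiling_iff by simp
    finally show ?thesis by auto
  qed
  then have "card {n. h < diverse_len \<alpha> n} = nat \<lceil>h powr (-\<alpha>) - 1\<rceil>"
    by (metis card_lessThan subset_antisym subsetI)
  moreover have "0 < h powr (-\<alpha>)" using assms(2) by simp
  ultimately show "h powr (-\<alpha>) - 1 \<le> card {n. h < diverse_len \<alpha> n}"
    and "card {n. h < diverse_len \<alpha> n} \<le> h powr (-\<alpha>)"
    by linarith+
qed

context
  fixes \<alpha> :: real
  assumes \<alpha>: "0 < \<alpha>" "\<alpha> < 1"
begin

lemma summable_diverse_len: "summable (diverse_len \<alpha>)"
proof -
  have "-1/\<alpha> < -1" using \<alpha> by (simp add: field_simps)
  then have "summable (\<lambda>n. real n powr (-1/\<alpha>))" by (simp add: summable_real_powr_iff)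
  then have "summable (\<lambda>n. real (Suc n) powr (-1/\<alpha>))" by (subst summable_Suc_iff)
  then show ?thesis unfolding diverse_len_def by (simp add: add.commute)
qed

lemma diverse_seq_strict_mono: "strict_mono (diverse_seq \<alpha>)"
  by (rule strict_monoI_Suc) (simp add: diverse_seq_def diverse_len_pos)

lemma cut_points_diverse: "cut_points (diverse_seq \<alpha>) (suminf (diverse_len \<alpha>))"
  using strict_mono_mono[OF diverse_seq_strict_mono] summable_LIMSEQ[OF summable_diverse_len]
  by unfold_locales (simp_all add: diverse_seq_def[abs_def])

lemma cut_points_truncated: "cut_points (truncated_seq \<alpha> N) (suminf (diverse_len \<alpha>))"
proof
  show "mono (truncated_seq \<alpha> N)"
    using cut_points.le_lim[OF cut_points_diverse] strict_mono_mono[OF diverse_seq_strict_mono]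
    by (intro monoI) (auto simp: truncated_seq_def dest: monoD)
  show "truncated_seq \<alpha> N 0 = 0" by (simp add: truncated_seq_def diverse_seq_def)
  show "truncated_seq \<alpha> N \<longlonglongrightarrow> suminf (diverse_len \<alpha>)"
    by (rule tendsto_eventually) (auto simp: truncated_seq_def eventually_sequentially intro!: exI[of _ "Suc N"])
qed

lemma diverse_seq_less_mass: "diverse_seq \<alpha> n < suminf (diverse_len \<alpha>)"
  unfolding diverse_seq_def using sum_less_suminf[OF summable_diverse_len] diverse_len_pos by blast

lemma seq_blocks_diverse_seq:
  "seq_blocks (diverse_seq \<alpha>) = range (\<lambda>n. (diverse_seq \<alpha> n, diverse_seq \<alpha> (Suc n)))"
  unfolding seq_blocks_def using strict_monoD[OF diverse_seq_strict_mono] by auto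

lemma diverse_mass_pos: "0 < suminf (diverse_len \<alpha>)"
  using diverse_seq_less_mass[of 0] by (simp add: diverse_seq_def)

lemma diverse_nonempty: "seq_blocks (diverse_seq \<alpha>) \<noteq> {}"
  unfolding seq_blocks_diverse_seq by simp

lemma div_count_diverse_tendsto:
  "(div_count \<alpha> (seq_blocks (diverse_seq \<alpha>)) (suminf (diverse_len \<alpha>)) \<longlongrightarrow> 1) (at_right 0)"
proof (rule tendsto_sandwich[of "\<lambda>h. 1 - h powr \<alpha>" _ _ "\<lambda>_. 1"])
  let ?\<beta> = "seq_blocks (diverse_seq \<alpha>)" and ?L = "suminf (diverse_len \<alpha>)"
  have count: "card {(a,b)\<in>?\<beta>. b - a > h \<and> b \<le> ?L} = card {n. h < diverse_len \<alpha> n}" for h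
  proof -
    have "{(a,b)\<in>?\<beta>. b - a > h \<and> b \<le> ?L}
        = (\<lambda>n. (diverse_seq \<alpha> n, diverse_seq \<alpha> (Suc n))) ` {n. h < diverse_len \<alpha> n}"
      unfolding seq_blocks_diverse_seq using diverse_seq_less_mass[of "Suc _"]
      by (auto simp: diverse_seq_def less_imp_le)
    moreover have "inj (\<lambda>n. (diverse_seq \<alpha> n, diverse_seq \<alpha> (Suc n)))"
      using strict_mono_imp_inj_on[OF diverse_seq_strict_mono] by (auto simp: inj_on_def)
    ultimately show ?thesis by (simp add: card_image inj_on_subset)
  qed
  have cancel: "h powr \<alpha> * h powr (-\<alpha>) = 1" if "0 < h" for h :: real
    using that by (simp add: powr_add[symmetric])
  show "\<forall>\<^sub>F h in at_right 0. 1 - h powr \<alpha> \<le> div_count \<alpha> ?\<beta> ?L h"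
  proof (rule eventually_mono[OF eventually_at_right_less[of "0::real"]])
    fix h :: real assume "0 < h"
    have "h powr \<alpha> * (h powr (-\<alpha>) - 1) \<le> h powr \<alpha> * card {n. h < diverse_len \<alpha> n}"
      using card_diverse_len_greater(1)[OF \<alpha>(1) \<open>0 < h\<close>] by (intro mult_left_mono) auto
    then show "1 - h powr \<alpha> \<le> div_count \<alpha> ?\<beta> ?L h"
      unfolding div_count_def count using cancel[OF \<open>0 < h\<close>] by (simp add: right_diff_distrib)
  qed
  show "\<forall>\<^sub>F h in at_right 0. div_count \<alpha> ?\<beta> ?L h \<le> 1"
  proof (rule eventually_mono[OF eventually_at_right_less[of "0::real"]])
    fix h :: real assume "0 < h"
    have "h powr \<alpha> * card {n. h < diverse_len \<alpha> n} \<le> h powr \<alpha> * h powr (-\<alpha>)"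
      using card_diverse_len_greater(2)[OF \<alpha>(1) \<open>0 < h\<close>] by (intro mult_left_mono) auto
    then show "div_count \<alpha> ?\<beta> ?L h \<le> 1"
      unfolding div_count_def count using cancel[OF \<open>0 < h\<close>] by simp
  qed
  show "((\<lambda>h. 1 - h powr \<alpha>) \<longlongrightarrow> 1) (at_right 0)"
    using tendsto_diff[OF tendsto_const tendsto_powr_at_right_0[OF \<alpha>(1)], of 1] by simp
qed simp

lemma diverse_in_I_alpha: "seq_blocks (diverse_seq \<alpha>) \<in> I_alpha \<alpha>"
proof -
  have "\<exists>l. (div_count \<alpha> (seq_blocks (diverse_seq \<alpha>)) t \<longlongrightarrow> l) (at_right 0)"
    if t: "t \<in> {0..suminf (diverse_len \<alpha>)}" for t
  proof (cases "t = suminf (diverse_len \<alpha>)")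
    case True
    then show ?thesis using div_count_diverse_tendsto by blast
  next
    case False
    with t have "t < suminf (diverse_len \<alpha>)" by simp
    then obtain M where M: "t < diverse_seq \<alpha> M"
      using cut_points.exists_above[OF cut_points_diverse] by blast
    have "n < M" if "diverse_seq \<alpha> (Suc n) \<le> t" for n
    proof (rule ccontr)
      assume "\<not> n < M"
      then have "diverse_seq \<alpha> M \<le> diverse_seq \<alpha> (Suc n)"
        using strict_mono_mono[OF diverse_seq_strict_mono] by (simp add: monoD)
      with that M show False by simp
    qed
    then have "{U \<in> seq_blocks (diverse_seq \<alpha>). snd U \<le> t}
        \<subseteq> (\<lambda>n. (diverse_seq \<alpha> n, diverse_seq \<alpha> (Suc n))) ` {..<M}"
      unfolding seq_blocks_diverse_seq by auto
    then have "finite {U \<in> seq_blocks (diverse_seq \<alpha>). snd U \<le> t}"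
      by (rule finite_subset) simp
    then show ?thesis using div_count_tendsto_0[OF \<alpha>(1)] by blast
  qed
  then show ?thesis
    using cut_points.IP_mass_seq_blocks[OF cut_points_diverse diverse_nonempty]
      cut_points.interval_partition_seq_blocks[OF cut_points_diverse]
    unfolding I_alpha_def diversity_property_def by simp
qed

lemma total_div_diverse: "total_div \<alpha> (seq_blocks (diverse_seq \<alpha>)) = Gamma (1 - \<alpha>)"
  unfolding total_div_def cut_points.IP_mass_seq_blocks[OF cut_points_diverse diverse_nonempty]
  using diversity_eqI[OF div_count_diverse_tendsto] by simp

lemma truncated_nonempty: "seq_blocks (truncated_seq \<alpha> N) \<noteq> {}"
proof -
  have "truncated_seq \<alpha> N 0 < truncated_seq \<alpha> N (Suc 0)"
    using diverse_mass_pos diverse_len_pos[of \<alpha> 0]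
    by (simp add: truncated_seq_def diverse_seq_def)
  then show ?thesis unfolding seq_blocks_def by blast
qed

lemma truncated_in_I_alpha: "seq_blocks (truncated_seq \<alpha> N) \<in> I_alpha \<alpha>"
  and total_div_truncated: "total_div \<alpha> (seq_blocks (truncated_seq \<alpha> N)) = 0"
proof -
  have "n \<le> N" if "truncated_seq \<alpha> N n < truncated_seq \<alpha> N (Suc n)" for n
    using that by (auto simp: truncated_seq_def split: if_splits)
  then have "seq_blocks (truncated_seq \<alpha> N)
      \<subseteq> (\<lambda>n. (truncated_seq \<alpha> N n, truncated_seq \<alpha> N (Suc n))) ` {..N}"
    unfolding seq_blocks_def by auto
  then have "finite (seq_blocks (truncated_seq \<alpha> N))" by (rule finite_subset) simp
  then have lim: "(div_count \<alpha> (seq_blocks (truncated_seq \<alpha> N)) t \<longlongrightarrow> 0) (at_right 0)" for t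
    by (intro div_count_tendsto_0 \<alpha>(1)) simp
  then show "seq_blocks (truncated_seq \<alpha> N) \<in> I_alpha \<alpha>"
    unfolding I_alpha_def diversity_property_def
    using cut_points.interval_partition_seq_blocks[OF cut_points_truncated] by blast
  show "total_div \<alpha> (seq_blocks (truncated_seq \<alpha> N)) = 0"
    unfolding total_div_def using diversity_eqI[OF lim] by simp
qed

lemma d_H_diverse_truncated:
  "d_H (seq_blocks (diverse_seq \<alpha>)) (seq_blocks (truncated_seq \<alpha> N))
    \<le> suminf (diverse_len \<alpha>) - diverse_seq \<alpha> N"
proof -
  let ?L = "suminf (diverse_len \<alpha>)"
  have C1: "C_set (seq_blocks (diverse_seq \<alpha>)) = range (diverse_seq \<alpha>) \<union> {?L}"
    by (rule cut_points.C_set_seq_blocks[OF cut_points_diverse diverse_nonempty])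
  have C2: "C_set (seq_blocks (truncated_seq \<alpha> N)) = range (truncated_seq \<alpha> N) \<union> {?L}"
    by (rule cut_points.C_set_seq_blocks[OF cut_points_truncated truncated_nonempty])
  have mono: "diverse_seq \<alpha> N \<le> diverse_seq \<alpha> n" if "N \<le> n" for n
    using strict_mono_mono[OF diverse_seq_strict_mono] that by (rule monoD)
  show ?thesis
    unfolding d_H_def C1 C2
  proof (rule hausdorff_dist_le)
    fix x assume x: "x \<in> range (diverse_seq \<alpha>) \<union> {?L}"
    show "\<exists>y\<in>range (truncated_seq \<alpha> N) \<union> {?L}. dist x y \<le> ?L - diverse_seq \<alpha> N"
    proof (cases "x = ?L")
      case True
      then show ?thesis using diverse_seq_less_mass[of N] by auto
    next
      case False
      with x obtain n where n: "x = diverse_seq \<alpha> n" by auto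
      show ?thesis
      proof (cases "n \<le> N")
        case True
        then have "x \<in> range (truncated_seq \<alpha> N)"
          unfolding n truncated_seq_def by (intro range_eqI[of _ _ n]) simp
        then show ?thesis using less_imp_le[OF diverse_seq_less_mass] by (intro bexI[of _ x]) auto
      next
        case False
        then show ?thesis using mono[of n] diverse_seq_less_mass[of n] n
          by (intro bexI[of _ ?L]) (auto simp: dist_real_def)
      qed
    qed
  next
    fix y assume "y \<in> range (truncated_seq \<alpha> N) \<union> {?L}"
    then have "y \<in> range (diverse_seq \<alpha>) \<union> {?L}" by (auto simp: truncated_seq_def)
    then show "\<exists>x\<in>range (diverse_seq \<alpha>) \<union> {?L}. dist y x \<le> ?L - diverse_seq \<alpha> N"
      using diverse_seq_less_mass[of N] by (intro bexI[of _ y]) auto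
  qed auto
qed

lemma not_cont_wrt_d_H_total_div: "\<not> cont_wrt (I_alpha \<alpha>) d_H dist (total_div \<alpha>)"
proof
  assume cont: "cont_wrt (I_alpha \<alpha>) d_H dist (total_div \<alpha>)"
  have "0 < Gamma (1 - \<alpha>)" using \<alpha>(2) by simp
  from cont[unfolded cont_wrt_def, rule_format, OF diverse_in_I_alpha this]
  obtain \<delta> where "\<delta> > 0" and \<delta>: "\<forall>\<gamma>\<in>I_alpha \<alpha>. d_H (seq_blocks (diverse_seq \<alpha>)) \<gamma> < \<delta>
      \<longrightarrow> dist (total_div \<alpha> (seq_blocks (diverse_seq \<alpha>))) (total_div \<alpha> \<gamma>) < Gamma (1 - \<alpha>)"
    by blast
  have "suminf (diverse_len \<alpha>) - \<delta> < suminf (diverse_len \<alpha>)" using \<open>\<delta> > 0\<close> by simp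
  then obtain N where "suminf (diverse_len \<alpha>) - \<delta> < diverse_seq \<alpha> N"
    using cut_points.exists_above[OF cut_points_diverse] by blast
  then have "d_H (seq_blocks (diverse_seq \<alpha>)) (seq_blocks (truncated_seq \<alpha> N)) < \<delta>"
    using d_H_diverse_truncated[of N] by linarith
  with \<delta> truncated_in_I_alpha show False
    by (auto simp: total_div_diverse total_div_truncated dist_real_def)
qed

end

theorem theorem2p4:
  fixes \<alpha> :: real
  assumes "0 < \<alpha>" and "\<alpha> < 1"
  shows
    "(\<forall>f::real \<Rightarrow> real. continuous_on {0..} f \<and> bounded (f ` {0..}) \<longrightarrow>
        cont_wrt (I_alpha \<alpha>) (d_alpha \<alpha>) dist (\<lambda>\<beta>. M_integral \<alpha> \<beta> f))
     \<and> cont_wrt (I_alpha \<alpha>) (d_alpha \<alpha>) dist (total_div \<alpha>)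
     \<and> \<not> cont_wrt (I_alpha \<alpha>) d_H dist (total_div \<alpha>)
     \<and> (\<forall>\<beta>\<in>I_alpha \<alpha>. summable (ranked \<beta>))
     \<and> cont_wrt (I_alpha \<alpha>) (d_alpha \<alpha>) (\<lambda>x y. \<Sum>k. \<bar>x k - y k\<bar>) ranked"
proof (intro conjI allI impI ballI)
  fix f :: "real \<Rightarrow> real"
  assume "continuous_on {0..} f \<and> bounded (f ` {0..})"
  then show "cont_wrt (I_alpha \<alpha>) (d_alpha \<alpha>) dist (\<lambda>\<beta>. M_integral \<alpha> \<beta> f)"
    using cont_wrt_M_integral[OF assms(2)] by blast
next
  show "cont_wrt (I_alpha \<alpha>) (d_alpha \<alpha>) dist (total_div \<alpha>)"
    by (rule cont_wrt_total_div)
  show "\<not> cont_wrt (I_alpha \<alpha>) d_H dist (total_div \<alpha>)"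
    by (rule not_cont_wrt_d_H_total_div[OF assms])
  show "cont_wrt (I_alpha \<alpha>) (d_alpha \<alpha>) (\<lambda>x y. \<Sum>k. \<bar>x k - y k\<bar>) ranked"
    by (rule cont_wrt_ranked)
next
  fix \<beta> assume "\<beta> \<in> I_alpha \<alpha>"
  then show "summable (ranked \<beta>)"
    unfolding I_alpha_def by (auto intro: summable_ranked)
qed

end
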